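(* A compatible random substitution $\vartheta$ is recognisable if and only if it is locally recognisable.
   Context: A random substitution on a finite alphabet $\mathcal A$ is a map $\vartheta$ from $\mathcal A$ to non-empty finite sets of non-empty words, extended to words by concatenating choices and iterated. Legal words are subwords of words in some $\vartheta^p(a)$; $X_\vartheta\subseteq\mathcal A^{\mathbb Z}$ is the set of sequences all of whose subwords are legal, with shift $\sigma(x)_i=x_{i+1}$. For $y\in\mathcal A^{\mathbb Z}$, $\vartheta(y)$ is the set of sequences $\cdots w_{-1}w_0w_1\cdots$ with $w_i\in\vartheta(y_i)$, $w_0$ starting at index $0$. $\vartheta$ is compatible if for each $a$ all words in $\vartheta(a)$ have the same letter counts (so $|\vartheta(a)|$ is well defined). A compatible $\vartheta$ is recognisable if for every $x\in X_\vartheta$ there are a unique $y\in X_\vartheta$ and a unique $0\le k\le|\vartheta(y_0)|-1$ with $\sigma^{-k}(x)\in\vartheta(y)$. Inflation word decompositions: for a legal word $u$, a pair $([u_1,\ldots,u_\ell],v)$ with non-empty words $u_i$, $u_1\cdots u_\ell=u$, and a legal word $v=v_1\cdots v_\ell$ ($v_i$ letters) such that $u_i\in\vartheta(v_i)$ for $2\le i\le\ell-1$, $u_1$ is a suffix of a word in $\vartheta(v_1)$, and $u_\ell$ is a prefix of a word in $\vartheta(v_\ell)$. A decomposition of $u$ induces a decomposition on any subword occurrence $u_{[i,j]}$ by cutting the first and last relevant pieces at positions $i,j$ and keeping the corresponding segment $v_{[k(i),k(j)]}$ of the root. A legal word $u$ is recognisable with radius $N$ if for every legal word $w=u^{(l)}uu^{(r)}$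 with $|u^{(l)}|=|u^{(r)}|=N$, all inflation word decompositions of $w$ induce the same decomposition on the central occurrence of $u$; the radius of recognisability of $u$ is the least such $N$. $\vartheta$ is locally recognisable if there is $N$ such that every legal word is recognisable with radius of recognisability at most $N$. *)

theory Defs
  imports Main "HOL-Library.Sublist" "HOL-Library.Multiset"
begin

definition random_subst :: "('a::finite \<Rightarrow> 'a list set) \<Rightarrow> bool" where
  "random_subst \<theta> \<longleftrightarrow> (\<forall>a. finite (\<theta> a) \<and> \<theta> a \<noteq> {} \<and> (\<forall>u\<in>\<theta> a. u \<noteq> []))"

definition subst_word :: "('a \<Rightarrow> 'a list set) \<Rightarrow> 'a list \<Rightarrow> 'a list set" where
  "subst_word \<theta> w = {concat us | us. list_all2 (\<lambda>u a. u \<in> \<theta> a) us w}"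

fun subst_pow :: "('a \<Rightarrow> 'a list set) \<Rightarrow> nat \<Rightarrow> 'a list \<Rightarrow> 'a list set" where
  "subst_pow \<theta> 0 w = {w}"
| "subst_pow \<theta> (Suc p) w = (\<Union>v\<in>subst_pow \<theta> p w. subst_word \<theta> v)"

definition legal :: "('a \<Rightarrow> 'a list set) \<Rightarrow> 'a list \<Rightarrow> bool" where
  "legal \<theta> u \<longleftrightarrow> (\<exists>p a. \<exists>w\<in>subst_pow \<theta> p [a]. sublist u w)"

definition seq_word :: "(int \<Rightarrow> 'a) \<Rightarrow> int \<Rightarrow> nat \<Rightarrow> 'a list" where
  "seq_word x i n = map (\<lambda>k. x (i + int k)) [0..<n]"

definition subshift :: "('a \<Rightarrow> 'a list set) \<Rightarrow> (int \<Rightarrow> 'a) set" where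
  "subshift \<theta> = {x. \<forall>i n. legal \<theta> (seq_word x i n)}"

text \<open>theta(y) for a bi-infinite sequence y: sequences ... w_(-1) w_0 w_1 ... with
  w_i in theta(y_i) and w_0 starting at index 0; c i is the starting index of w_i.\<close>
definition subst_seq :: "('a \<Rightarrow> 'a list set) \<Rightarrow> (int \<Rightarrow> 'a) \<Rightarrow> (int \<Rightarrow> 'a) set" where
  "subst_seq \<theta> y = {x. \<exists>w :: int \<Rightarrow> 'a list. \<exists>c :: int \<Rightarrow> int.
      (\<forall>i. w i \<in> \<theta> (y i)) \<and> c 0 = 0 \<and>
      (\<forall>i. c (i + 1) = c i + int (length (w i))) \<and>
      (\<forall>i k. k < length (w i) \<longrightarrow> x (c i + int k) = w i ! k)}"

definition shift :: "(int \<Rightarrow> 'a) \<Rightarrow> int \<Rightarrow> 'a" where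
  "shift x = (\<lambda>i. x (i + 1))"

definition shift_pow :: "int \<Rightarrow> (int \<Rightarrow> 'a) \<Rightarrow> int \<Rightarrow> 'a" where
  "shift_pow n x = (\<lambda>i. x (i + n))"

definition compatible :: "('a \<Rightarrow> 'a list set) \<Rightarrow> bool" where
  "compatible \<theta> \<longleftrightarrow> (\<forall>a u v. u \<in> \<theta> a \<longrightarrow> v \<in> \<theta> a \<longrightarrow> mset u = mset v)"

text \<open>|theta(a)|, well defined for compatible theta.\<close>
definition infl_len :: "('a \<Rightarrow> 'a list set) \<Rightarrow> 'a \<Rightarrow> nat" where
  "infl_len \<theta> a = length (SOME u. u \<in> \<theta> a)"

definition recognisable :: "('a::finite \<Rightarrow> 'a list set) \<Rightarrow> bool" where
  "recognisable \<theta> \<longleftrightarrow> compatible \<theta> \<and>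
     (\<forall>x\<in>subshift \<theta>. \<exists>!(y, k). y \<in> subshift \<theta> \<and> k < infl_len \<theta> (y 0) \<and>
         shift_pow (- int k) x \<in> subst_seq \<theta> y)"

definition infl_decomps :: "('a \<Rightarrow> 'a list set) \<Rightarrow> 'a list \<Rightarrow> ('a list list \<times> 'a list) set" where
  "infl_decomps \<theta> u = {(us, v). length us = length v \<and> (\<forall>p\<in>set us. p \<noteq> []) \<and>
      concat us = u \<and> legal \<theta> v \<and>
      (\<forall>i. 0 < i \<and> i + 1 < length us \<longrightarrow> us ! i \<in> \<theta> (v ! i)) \<and>
      (us \<noteq> [] \<longrightarrow> (\<exists>t\<in>\<theta> (v ! 0). suffix (us ! 0) t) \<and>
                    (\<exists>t\<in>\<theta> (v ! (length v - 1)). prefix (us ! (length us - 1)) t))}"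

definition piece_start :: "'a list list \<Rightarrow> nat \<Rightarrow> nat" where
  "piece_start us k = length (concat (take k us))"

definition piece_idx :: "'a list list \<Rightarrow> nat \<Rightarrow> nat" where
  "piece_idx us i = (LEAST k. i < length (concat (take (Suc k) us)))"

text \<open>Decomposition induced by (us, v) on the occurrence of length m (m \<ge> 1) starting
  at position i: the relevant pieces, with the first and last cut at the occurrence
  boundaries, and the corresponding segment of the root.\<close>
definition induced_decomp ::
  "'a list list \<times> 'a list \<Rightarrow> nat \<Rightarrow> nat \<Rightarrow> 'a list list \<times> 'a list" where
  "induced_decomp d i m =
     (let us = fst d; v = snd d;
          ka = piece_idx us i; kb = piece_idx us (i + m - 1)
      in (map (\<lambda>k. drop (i - piece_start us k) (take (i + m - piece_start us k) (us ! k)))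
              [ka..<Suc kb],
          take (Suc kb - ka) (drop ka v)))"

definition recognisable_radius :: "('a \<Rightarrow> 'a list set) \<Rightarrow> 'a list \<Rightarrow> nat \<Rightarrow> bool" where
  "recognisable_radius \<theta> u N \<longleftrightarrow>
     (\<forall>ul ur. length ul = N \<longrightarrow> length ur = N \<longrightarrow> legal \<theta> (ul @ u @ ur) \<longrightarrow>
        (\<forall>d1\<in>infl_decomps \<theta> (ul @ u @ ur). \<forall>d2\<in>infl_decomps \<theta> (ul @ u @ ur).
            induced_decomp d1 N (length u) = induced_decomp d2 N (length u)))"

text \<open>Locally recognisable: a uniform bound N on the radius of recognisability
  (the least radius) of every (non-empty) legal word.\<close>
definition locally_recognisable :: "('a \<Rightarrow> 'a list set) \<Rightarrow> bool" where
  "locally_recognisable \<theta> \<longleftrightarrow>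
     (\<exists>N. \<forall>u. legal \<theta> u \<and> u \<noteq> [] \<longrightarrow> (\<exists>N'\<le>N. recognisable_radius \<theta> u N'))"

end

theory Submission
  imports Defs
begin

text \<open>Both directions work with labellings: a labelling of \<open>x\<close> records at every position the
  inflation word covering it, its root letter and the offset inside it, and a labelling with legal
  root words yields a preimage \<open>(y, k)\<close> with \<open>\<sigma>\<^sup>-\<^sup>k x \<in> \<theta>(y)\<close>. Every legal word of
  length at least two carries a labelling and there are only finitely many labels, so compactness
  turns labelled windows into labellings of whole sequences; this gives existence of preimages.

  If \<open>\<theta>\<close> is locally recognisable, two preimages of \<open>x\<close> induce decompositions of every window
  of \<open>x\<close>, which must agree near the centre of the window: on the root letter and on whether a
  tile starts there. By compatibility the tile lengths are then determined, so the preimages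
  coincide. Conversely, if \<open>\<theta>\<close> is not locally recognisable, then for every \<open>n\<close> some legal
  word has two decompositions that disagree at distance \<open>n\<close> from both ends; compactness
  produces a point of \<open>X\<^sub>\<theta>\<close> with two labellings disagreeing at \<open>0\<close>, that is, with two
  different preimages.\<close>

section \<open>Decompositions of a word into pieces\<close>

lemma piece_start_0 [simp]: "piece_start us 0 = 0"
  by (simp add: piece_start_def)

lemma piece_start_Suc:
  "q < length us \<Longrightarrow> piece_start us (Suc q) = piece_start us q + length (us ! q)"
  by (simp add: piece_start_def take_Suc_conv_app_nth)

lemma piece_start_Cons_Suc [simp]: "piece_start (p # us) (Suc q) = length p + piece_start us q"
  by (simp add: piece_start_def)

lemma piece_start_mono: "q \<le> q' \<Longrightarrow> piece_start us q \<le> piece_start us q'"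
  unfolding piece_start_def
  by (metis concat_append le_add1 le_add_diff_inverse length_append take_add)

lemma piece_start_ge_length: "length us \<le> q \<Longrightarrow> piece_start us q = length (concat us)"
  by (simp add: piece_start_def)

lemma piece_start_strict_mono:
  assumes "[] \<notin> set us" "q < q'" "q' \<le> length us"
  shows "piece_start us q < piece_start us q'"
proof -
  have q: "q < length us" using assms by simp
  then have "us ! q \<noteq> []" using assms(1) nth_mem by fastforce
  then have "piece_start us q < piece_start us (Suc q)" using piece_start_Suc[OF q] by simp
  also have "\<dots> \<le> piece_start us q'" using assms by (intro piece_start_mono) simp
  finally show ?thesis .
qed

lemma piece_idx_eqI:
  "piece_start us q \<le> j \<Longrightarrow> j < piece_start us (Suc q) \<Longrightarrow> piece_idx us j = q"
  unfolding piece_idx_def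
proof (rule Least_equality)
  assume "j < piece_start us (Suc q)"
  then show "j < length (concat (take (Suc q) us))" by (simp add: piece_start_def)
next
  fix k assume "piece_start us q \<le> j" "j < length (concat (take (Suc k) us))"
  then have "\<not> piece_start us (Suc k) \<le> piece_start us q" by (simp add: piece_start_def)
  then show "q \<le> k" using piece_start_mono by (metis not_less_eq_eq)
qed

lemma piece_idx_bounds:
  assumes "j < length (concat us)"
  shows "piece_idx us j < length us" "piece_start us (piece_idx us j) \<le> j"
    "j < piece_start us (Suc (piece_idx us j))"
proof -
  let ?P = "\<lambda>k. j < length (concat (take (Suc k) us))"
  have ne: "us \<noteq> []" using assms by auto
  have P1: "?P (length us - 1)" using assms ne by simp
  have k: "piece_idx us j = (LEAST k. ?P k)" by (simp add: piece_idx_def)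
  have "?P (piece_idx us j)" unfolding k by (rule LeastI[of ?P, OF P1])
  then show "j < piece_start us (Suc (piece_idx us j))" by (simp add: piece_start_def)
  have "piece_idx us j \<le> length us - 1" unfolding k by (rule Least_le[of ?P, OF P1])
  then show "piece_idx us j < length us" using ne by (cases us) auto
  show "piece_start us (piece_idx us j) \<le> j"
  proof (cases "piece_idx us j")
    case (Suc k')
    then have "\<not> ?P k'" using not_less_Least[of k' ?P] k by (metis lessI)
    then show ?thesis using Suc by (simp add: piece_start_def)
  qed simp
qed

lemma piece_idx_mono:
  assumes "j \<le> j'" "j' < length (concat us)"
  shows "piece_idx us j \<le> piece_idx us j'"
proof (rule ccontr)
  assume "\<not> ?thesis"
  then have "piece_start us (Suc (piece_idx us j')) \<le> piece_start us (piece_idx us j)"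
    by (intro piece_start_mono) simp
  then show False using piece_idx_bounds[of j us] piece_idx_bounds[of j' us] assms by simp
qed

lemma concat_nth_piece_idx:
  assumes "j < length (concat us)"
  shows "concat us ! j = (us ! piece_idx us j) ! (j - piece_start us (piece_idx us j))"
proof -
  let ?k = "piece_idx us j"
  note r = piece_idx_bounds[OF assms]
  have "us = take ?k us @ us ! ?k # drop (Suc ?k) us" using r(1) by (rule id_take_nth_drop)
  then have e: "concat us = concat (take ?k us) @ us ! ?k @ concat (drop (Suc ?k) us)"
    by (metis concat.simps(2) concat_append)
  have "j - piece_start us ?k < length (us ! ?k)" using r piece_start_Suc[OF r(1)] by simp
  then show ?thesis using r(2) unfolding e by (simp add: nth_append piece_start_def)
qed

lemma piece_idx_Cons_less: "j < length p \<Longrightarrow> piece_idx (p # us) j = 0"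
  by (rule piece_idx_eqI) (simp_all add: piece_start_def)

lemma piece_idx_Cons_ge:
  "j < length (concat us) \<Longrightarrow> piece_idx (p # us) (length p + j) = Suc (piece_idx us j)"
  using piece_idx_bounds[of j us] by (intro piece_idx_eqI) simp_all

definition is_piece_start :: "'a list list \<Rightarrow> nat \<Rightarrow> bool" where
  "is_piece_start us j \<longleftrightarrow> (\<exists>q<length us. piece_start us q = j)"

definition root_letter :: "'a list list \<times> 'a list \<Rightarrow> nat \<Rightarrow> 'a" where
  "root_letter d j = snd d ! piece_idx (fst d) j"

lemma is_piece_start_iff:
  assumes "[] \<notin> set us" "j < length (concat us)"
  shows "is_piece_start us j \<longleftrightarrow> piece_start us (piece_idx us j) = j"
proof
  assume "is_piece_start us j"
  then obtain q where q: "q < length us" "piece_start us q = j"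
    by (auto simp: is_piece_start_def)
  then have "piece_idx us j = q"
    using piece_start_strict_mono[OF assms(1), of q "Suc q"] by (intro piece_idx_eqI) auto
  then show "piece_start us (piece_idx us j) = j" using q by simp
next
  assume "piece_start us (piece_idx us j) = j"
  then show "is_piece_start us j"
    using piece_idx_bounds[OF assms(2)] by (auto simp: is_piece_start_def)
qed

lemma piece_idx_Suc_cases:
  assumes ne: "[] \<notin> set us" and n: "Suc n < length (concat us)"
  shows "piece_idx us (Suc n) =
    (if is_piece_start us (Suc n) then Suc (piece_idx us n) else piece_idx us n)"
proof -
  define q where "q = piece_idx us n"
  have r: "q < length us" "piece_start us q \<le> n" "n < piece_start us (Suc q)"
    using piece_idx_bounds[of n us] n unfolding q_def by auto
  show ?thesis
  proof (cases "Suc n < piece_start us (Suc q)")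
    case True
    then have "piece_idx us (Suc n) = q" using r by (intro piece_idx_eqI) auto
    then show ?thesis using is_piece_start_iff[OF ne n] r unfolding q_def by auto
  next
    case False
    then have e: "Suc n = piece_start us (Suc q)" using r by simp
    have sq: "Suc q < length us"
      using e n piece_start_ge_length[of us "Suc q"] by (metis not_less less_irrefl)
    have "Suc n < piece_start us (Suc (Suc q))"
      using e piece_start_strict_mono[OF ne, of "Suc q" "Suc (Suc q)"] sq by simp
    then have "piece_idx us (Suc n) = Suc q" using e by (intro piece_idx_eqI) auto
    moreover have "is_piece_start us (Suc n)" unfolding is_piece_start_def using sq e by auto
    ultimately show ?thesis unfolding q_def by simp
  qed
qed

lemma is_piece_start_Cons:
  assumes "p \<noteq> []"
  shows "is_piece_start (p # us) (length p + j) = is_piece_start us j"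
proof
  assume "is_piece_start (p # us) (length p + j)"
  then obtain q where "q < Suc (length us)" "piece_start (p # us) q = length p + j"
    by (auto simp: is_piece_start_def)
  then show "is_piece_start us j" using assms by (cases q) (auto simp: is_piece_start_def)
next
  assume "is_piece_start us j"
  then obtain q where "q < length us" "piece_start us q = j" by (auto simp: is_piece_start_def)
  then show "is_piece_start (p # us) (length p + j)"
    unfolding is_piece_start_def by (intro exI[of _ "Suc q"]) simp
qed

lemma is_piece_start_0: "us \<noteq> [] \<Longrightarrow> is_piece_start us 0"
  unfolding is_piece_start_def by (intro exI[of _ 0]) simp

lemma is_piece_start_Cons_length:
  "p \<noteq> [] \<Longrightarrow> us \<noteq> [] \<Longrightarrow> is_piece_start (p # us) (length p)"
  using is_piece_start_Cons[of p us 0] is_piece_start_0[of us] by simp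

lemma not_is_piece_start_Cons_inside:
  "0 < j \<Longrightarrow> j < length p \<Longrightarrow> \<not> is_piece_start (p # us) j"
proof
  assume "0 < j" "j < length p" "is_piece_start (p # us) j"
  then obtain k where "piece_start (p # us) k = j" "0 < j" "j < length p"
    by (auto simp: is_piece_start_def)
  then show False by (cases k) auto
qed

lemma first_piece_eq_if_same_starts:
  assumes "p \<noteq> []" "p' \<noteq> []" "concat (p # us) = concat (p' # us')"
    and "\<forall>j<length (concat (p # us)). is_piece_start (p # us) j = is_piece_start (p' # us') j"
  shows "p = p'"
proof -
  have not_shorter: "\<not> length p < length p'"
    if "p \<noteq> []" "length p + length (concat us) = length p' + length (concat us')"
      and "is_piece_start (p # us) (length p) = is_piece_start (p' # us') (length p)"
    for p p' :: "'a list" and us us'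
  proof
    assume less: "length p < length p'"
    then have "us \<noteq> []" using that(2) by auto
    then show False using that less is_piece_start_Cons_length[of p us]
        not_is_piece_start_Cons_inside[of "length p" p'] by simp
  qed
  have total: "length p + length (concat us) = length p' + length (concat us')"
    using assms(3) by (metis concat.simps(2) length_append)
  have "length p = length p'"
    using not_shorter[of p us p' us'] not_shorter[of p' us' p us] assms total
    by (metis add_less_cancel_left concat.simps(2) length_append length_greater_0_conv
        linorder_neqE_nat trans_less_add1)
  then show ?thesis using assms(3) by (metis append_eq_append_conv concat.simps(2))
qed

lemma root_letter_Cons_less: "j < length p \<Longrightarrow> root_letter (p # us, a # v) j = a"
  by (simp add: root_letter_def piece_idx_Cons_less)

lemma root_letter_Cons_ge:
  "j < length (concat us) \<Longrightarrow> root_letter (p # us, a # v) (length p + j) = root_letter (us, v) j"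
  by (simp add: root_letter_def piece_idx_Cons_ge)

lemma decomp_eq_if_same_starts_and_roots:
  assumes "[] \<notin> set us1" "[] \<notin> set us2" "concat us1 = concat us2"
    "length v1 = length us1" "length v2 = length us2"
    "\<forall>j<length (concat us1). is_piece_start us1 j = is_piece_start us2 j \<and>
        root_letter (us1, v1) j = root_letter (us2, v2) j"
  shows "us1 = us2 \<and> v1 = v2"
  using assms
proof (induction us1 arbitrary: us2 v1 v2)
  case Nil
  then show ?case by (cases us2) auto
next
  case (Cons p us1')
  have pne: "p \<noteq> []" using Cons.prems(1) by auto
  obtain p' us2' where us2: "us2 = p' # us2'" using Cons.prems(3) pne by (cases us2) auto
  obtain a v1' where v1: "v1 = a # v1'" using Cons.prems(4) by (cases v1) auto
  obtain a' v2' where v2: "v2 = a' # v2'" using Cons.prems(5) us2 by (cases v2) auto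
  have p'ne: "p' \<noteq> []" using Cons.prems(2) us2 by auto
  have pp: "p = p'"
    using first_piece_eq_if_same_starts[OF pne p'ne] Cons.prems(3,6) us2 by simp
  have "a = a'"
    using Cons.prems(6)[rule_format, of 0] pne pp us2 v1 v2 by (simp add: root_letter_Cons_less)
  moreover have "us1' = us2' \<and> v1' = v2'"
  proof (rule Cons.IH)
    show "[] \<notin> set us1'" "[] \<notin> set us2'" "concat us1' = concat us2'"
      "length v1' = length us1'" "length v2' = length us2'"
      using Cons.prems us2 v1 v2 pp by auto
    show "\<forall>j<length (concat us1'). is_piece_start us1' j = is_piece_start us2' j \<and>
        root_letter (us1', v1') j = root_letter (us2', v2') j"
    proof (intro allI impI)
      fix j assume "j < length (concat us1')"
      moreover have "concat us1' = concat us2'" using Cons.prems(3) us2 pp by simp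
      ultimately show "is_piece_start us1' j = is_piece_start us2' j \<and>
          root_letter (us1', v1') j = root_letter (us2', v2') j"
        using Cons.prems(6)[rule_format, of "length p + j"] pne us2 pp v1 v2
        by (simp add: is_piece_start_Cons root_letter_Cons_ge)
    qed
  qed
  ultimately show ?case using us2 pp v1 v2 by simp
qed

section \<open>Induced decompositions\<close>

lemma legal_sublist: "legal \<theta> v \<Longrightarrow> sublist u v \<Longrightarrow> legal \<theta> u"
  unfolding legal_def by (meson sublist_order.order.trans)

lemma legal_take_drop: "legal \<theta> v \<Longrightarrow> legal \<theta> (take n (drop k v))"
  by (erule legal_sublist) (meson sublist_drop sublist_take sublist_order.order.trans)

locale decomp_window =
  fixes us :: "'a list list" and v :: "'a list" and i m :: nat
  assumes pieces_nonempty: "[] \<notin> set us" and length_root: "length v = length us"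
    and window_nonempty: "0 < m" and window_inside: "i + m \<le> length (concat us)"
begin

abbreviation first_piece :: nat where "first_piece \<equiv> piece_idx us i"
abbreviation last_piece :: nat where "last_piece \<equiv> piece_idx us (i + m - 1)"
abbreviation n_parts :: nat where "n_parts \<equiv> Suc last_piece - first_piece"
abbreviation window_pieces :: "'a list list" where
  "window_pieces \<equiv> fst (induced_decomp (us, v) i m)"
abbreviation window_root :: "'a list" where
  "window_root \<equiv> snd (induced_decomp (us, v) i m)"

definition window_part :: "nat \<Rightarrow> 'a list" where
  "window_part k = drop (i - piece_start us k) (take (i + m - piece_start us k) (us ! k))"

lemma induced_decomp_eq:
  "induced_decomp (us, v) i m =
     (map (\<lambda>q. window_part (first_piece + q)) [0..<n_parts], take n_parts (drop first_piece v))"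
proof -
  have "map window_part [first_piece..<Suc last_piece] =
      map (\<lambda>q. window_part (first_piece + q)) [0..<n_parts]"
    by (rule nth_equalityI) (simp_all add: nth_upt del: upt_Suc)
  then show ?thesis unfolding induced_decomp_def Let_def window_part_def by simp
qed

lemma length_window_pieces: "length window_pieces = n_parts"
  by (simp add: induced_decomp_eq)

lemma window_pieces_nth: "q < n_parts \<Longrightarrow> window_pieces ! q = window_part (first_piece + q)"
  by (simp add: induced_decomp_eq)

lemma first_piece_bounds:
  "first_piece < length us" "piece_start us first_piece \<le> i" "i < piece_start us (Suc first_piece)"
  using piece_idx_bounds[of i us] window_inside window_nonempty by auto

lemma last_piece_bounds:
  "last_piece < length us" "piece_start us last_piece \<le> i + m - 1"
  "i + m - 1 < piece_start us (Suc last_piece)"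
  using piece_idx_bounds[of "i + m - 1" us] window_inside window_nonempty by auto

lemma first_piece_le_last_piece: "first_piece \<le> last_piece"
  using window_inside window_nonempty by (intro piece_idx_mono) auto

lemma piece_meets_window:
  assumes "first_piece \<le> k" "k \<le> last_piece"
  shows "piece_start us k \<le> i + m - 1" "i < piece_start us (Suc k)"
proof -
  have "piece_start us k \<le> piece_start us last_piece" using assms by (intro piece_start_mono)
  then show "piece_start us k \<le> i + m - 1" using last_piece_bounds by simp
  have "piece_start us (Suc first_piece) \<le> piece_start us (Suc k)"
    using assms by (intro piece_start_mono) simp
  then show "i < piece_start us (Suc k)" using first_piece_bounds by simp
qed

lemma length_piece:
  "k < length us \<Longrightarrow> length (us ! k) = piece_start us (Suc k) - piece_start us k"
  using piece_start_Suc[of k us] by simp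

lemma length_window_part:
  assumes "first_piece \<le> k" "k \<le> last_piece"
  shows "length (window_part k) = min (i + m) (piece_start us (Suc k)) - max i (piece_start us k)"
proof -
  have "k < length us" using assms last_piece_bounds by simp
  then show ?thesis using length_piece piece_meets_window[OF assms] window_nonempty
      piece_start_strict_mono[OF pieces_nonempty, of k "Suc k"]
    by (auto simp: window_part_def min_def max_def)
qed

lemma window_part_nonempty:
  assumes "first_piece \<le> k" "k \<le> last_piece"
  shows "window_part k \<noteq> []"
proof -
  have "k < length us" using assms last_piece_bounds by simp
  then have "0 < min (i + m) (piece_start us (Suc k)) - max i (piece_start us k)"
    using piece_start_strict_mono[OF pieces_nonempty, of k "Suc k"] piece_meets_window[OF assms]
      window_nonempty
    by (auto simp: min_def max_def)
  then show ?thesis using length_window_part[OF assms] by auto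
qed

lemma piece_start_window_pieces:
  "q \<le> n_parts \<Longrightarrow>
    piece_start window_pieces q = min (i + m) (max i (piece_start us (first_piece + q))) - i"
proof (induction q)
  case 0
  then show ?case using first_piece_bounds by (simp add: max_def)
next
  case (Suc q)
  then have q: "q < length window_pieces" using length_window_pieces by simp
  have k: "first_piece \<le> first_piece + q" "first_piece + q \<le> last_piece" using Suc.prems by auto
  have "piece_start window_pieces (Suc q) =
      piece_start window_pieces q + length (window_part (first_piece + q))"
    using piece_start_Suc[OF q] window_pieces_nth q length_window_pieces by simp
  also have "\<dots> = min (i + m) (max i (piece_start us (first_piece + Suc q))) - i"
    using Suc length_window_part[OF k] piece_meets_window[OF k] window_nonempty
      piece_start_mono[of "first_piece + q" "Suc (first_piece + q)" us]
    by (auto simp: min_def max_def)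
  finally show ?case .
qed

lemma length_concat_window_pieces: "length (concat window_pieces) = m"
proof -
  have "length (concat window_pieces) = piece_start window_pieces n_parts"
    using piece_start_ge_length[of window_pieces n_parts] length_window_pieces by simp
  also have "\<dots> = min (i + m) (max i (piece_start us (Suc last_piece))) - i"
    using piece_start_window_pieces[of n_parts] first_piece_le_last_piece by simp
  also have "\<dots> = m"
    using last_piece_bounds first_piece_bounds window_nonempty by (auto simp: min_def max_def)
  finally show ?thesis .
qed

lemma piece_idx_window_pieces:
  assumes j: "j < m"
  shows "piece_idx us (i + j) = first_piece + piece_idx window_pieces j"
    "piece_idx window_pieces j < n_parts"
proof -
  define q where "q = piece_idx us (i + j)"
  have r: "piece_start us q \<le> i + j" "i + j < piece_start us (Suc q)"
    using piece_idx_bounds[of "i + j" us] window_inside j unfolding q_def by auto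
  have q: "first_piece \<le> q" "q \<le> last_piece"
    unfolding q_def using window_inside j by (auto intro!: piece_idx_mono)
  have "piece_idx window_pieces j = q - first_piece"
  proof (rule piece_idx_eqI)
    show "piece_start window_pieces (q - first_piece) \<le> j"
      using piece_start_window_pieces[of "q - first_piece"] q r by (auto simp: min_def max_def)
    show "j < piece_start window_pieces (Suc (q - first_piece))"
      using piece_start_window_pieces[of "Suc (q - first_piece)"] q r j
      by (auto simp: min_def max_def Suc_diff_le)
  qed
  then show "piece_idx us (i + j) = first_piece + piece_idx window_pieces j"
    "piece_idx window_pieces j < n_parts"
    using q unfolding q_def by auto
qed

lemma window_pieces_nonempty: "[] \<notin> set window_pieces"
proof
  assume "[] \<in> set window_pieces"
  then obtain q where "q < n_parts" "window_pieces ! q = []"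
    by (metis in_set_conv_nth length_window_pieces)
  then show False using window_pieces_nth window_part_nonempty[of "first_piece + q"] by auto
qed

lemma length_window_root: "length window_root = length window_pieces"
  using length_root last_piece_bounds first_piece_le_last_piece
  by (simp add: induced_decomp_eq)

lemma nth_concat_window_pieces:
  assumes j: "j < m"
  shows "concat window_pieces ! j = concat us ! (i + j)"
proof -
  define q where "q = piece_idx us (i + j)"
  define j' where "j' = piece_idx window_pieces j"
  have r: "q < length us" "piece_start us q \<le> i + j" "i + j < piece_start us (Suc q)"
    using piece_idx_bounds[of "i + j" us] window_inside j unfolding q_def by auto
  have q: "q = first_piece + j'" "j' < n_parts"
    using piece_idx_window_pieces[OF j] unfolding q_def j'_def by auto
  have start: "piece_start window_pieces j' = min (i + m) (max i (piece_start us q)) - i"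
    using piece_start_window_pieces[of j'] q by simp
  have offset:
    "i - piece_start us q + (j - piece_start window_pieces j') = i + j - piece_start us q"
    using r j start by (auto simp: min_def max_def)
  have "concat window_pieces ! j = window_part q ! (j - piece_start window_pieces j')"
    using concat_nth_piece_idx[of j window_pieces] length_concat_window_pieces j
      window_pieces_nth q unfolding j'_def by simp
  also have "\<dots> = us ! q ! (i + j - piece_start us q)"
  proof -
    have "i - piece_start us q \<le> length (take (i + m - piece_start us q) (us ! q))"
      using r j length_piece[OF r(1)] by auto
    then show ?thesis using r j unfolding window_part_def by (simp add: offset)
  qed
  also have "\<dots> = concat us ! (i + j)"
    using concat_nth_piece_idx[of "i + j" us] window_inside j unfolding q_def by simp
  finally show ?thesis .
qed

lemma concat_window_pieces: "concat window_pieces = take m (drop i (concat us))"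
  using nth_concat_window_pieces length_concat_window_pieces window_inside
  by (intro nth_equalityI) auto

lemma root_letter_induced_decomp:
  "j < m \<Longrightarrow> root_letter (induced_decomp (us, v) i m) j = root_letter (us, v) (i + j)"
  using piece_idx_window_pieces[of j] length_root last_piece_bounds first_piece_bounds(1)
  by (simp add: root_letter_def induced_decomp_eq)

lemma is_piece_start_window_pieces:
  assumes j: "j < m"
  shows "is_piece_start window_pieces j \<longleftrightarrow> j = 0 \<or> is_piece_start us (i + j)"
proof
  assume "is_piece_start window_pieces j"
  then obtain q where q: "q < n_parts" "piece_start window_pieces q = j"
    unfolding is_piece_start_def length_window_pieces by auto
  then have "j = 0 \<or> piece_start us (first_piece + q) = i + j"
    using piece_start_window_pieces[of q] j by (auto simp: min_def max_def)
  moreover have "first_piece + q < length us" using q last_piece_bounds by simp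
  ultimately show "j = 0 \<or> is_piece_start us (i + j)" unfolding is_piece_start_def by blast
next
  assume "j = 0 \<or> is_piece_start us (i + j)"
  then show "is_piece_start window_pieces j"
  proof
    assume "j = 0"
    moreover have "window_pieces \<noteq> []"
      using length_window_pieces first_piece_le_last_piece by auto
    ultimately show ?thesis by (simp add: is_piece_start_0)
  next
    assume "is_piece_start us (i + j)"
    then have "piece_start us (first_piece + piece_idx window_pieces j) = i + j"
      using is_piece_start_iff[OF pieces_nonempty, of "i + j"] piece_idx_window_pieces[OF j]
        window_inside j by simp
    then have "piece_start window_pieces (piece_idx window_pieces j) = j"
      using piece_start_window_pieces[of "piece_idx window_pieces j"]
        piece_idx_window_pieces[OF j] j
      by (auto simp: min_def max_def)
    then show ?thesis
      using piece_idx_window_pieces(2)[OF j] length_window_pieces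
      unfolding is_piece_start_def by auto
  qed
qed

lemma window_root_nth: "q < n_parts \<Longrightarrow> window_root ! q = v ! (first_piece + q)"
  using length_root first_piece_bounds by (simp add: induced_decomp_eq)

lemma window_starts_before_piece: "first_piece < k \<Longrightarrow> i \<le> piece_start us k"
  using piece_start_mono[of "Suc first_piece" k us] first_piece_bounds by simp

lemma window_ends_after_piece: "k < last_piece \<Longrightarrow> piece_start us (Suc k) \<le> i + m"
  using piece_start_mono[of "Suc k" last_piece us] last_piece_bounds by simp

lemma window_covers_piece:
  assumes "k < last_piece"
  shows "length (us ! k) \<le> i + m - piece_start us k"
proof -
  have "k < length us" using assms last_piece_bounds by simp
  then show ?thesis using length_piece window_ends_after_piece[OF assms] by (simp add: diff_le_mono)
qed

lemma window_part_inner: "first_piece < k \<Longrightarrow> k < last_piece \<Longrightarrow> window_part k = us ! k"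
  using window_starts_before_piece window_covers_piece by (simp add: window_part_def)

lemma window_part_first:
  "first_piece < last_piece \<Longrightarrow>
    window_part first_piece = drop (i - piece_start us first_piece) (us ! first_piece)"
  using window_covers_piece by (simp add: window_part_def)

lemma window_part_last:
  "first_piece < last_piece \<Longrightarrow>
    window_part last_piece = take (i + m - piece_start us last_piece) (us ! last_piece)"
  using window_starts_before_piece by (simp add: window_part_def)

lemma induced_decomp_in_infl_decomps:
  assumes full: "\<forall>q<length us. us ! q \<in> \<theta> (v ! q)" and legal: "legal \<theta> v"
    and two: "first_piece < last_piece"
  shows "induced_decomp (us, v) i m \<in> infl_decomps \<theta> (take m (drop i (concat us)))"
proof -
  have n_parts: "0 < n_parts" "n_parts - 1 < n_parts" "first_piece + (n_parts - 1) = last_piece"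
    using two by auto
  have inner: "window_pieces ! q \<in> \<theta> (window_root ! q)"
    if "0 < q" "q + 1 < length window_pieces" for q
  proof -
    have "first_piece < first_piece + q" "first_piece + q < last_piece" "q < n_parts"
      using that length_window_pieces by auto
    then show ?thesis
      using window_pieces_nth window_root_nth window_part_inner full last_piece_bounds by simp
  qed
  have "us ! first_piece \<in> \<theta> (window_root ! 0)"
    using full first_piece_bounds window_root_nth[OF n_parts(1)] by simp
  then have first: "\<exists>t\<in>\<theta> (window_root ! 0). suffix (window_pieces ! 0) t"
    using window_pieces_nth[OF n_parts(1)] window_part_first[OF two] suffix_drop by fastforce
  have "us ! last_piece \<in> \<theta> (window_root ! (length window_root - 1))"
    using full last_piece_bounds window_root_nth[OF n_parts(2)] n_parts(3) length_window_root
      length_window_pieces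
    by simp
  then have last: "\<exists>t\<in>\<theta> (window_root ! (length window_root - 1)).
      prefix (window_pieces ! (length window_pieces - 1)) t"
    using window_pieces_nth[OF n_parts(2)] n_parts(3) window_part_last[OF two]
      length_window_pieces take_is_prefix
    by fastforce
  have "legal \<theta> window_root"
    using legal_take_drop[OF legal] by (simp add: induced_decomp_eq)
  then show ?thesis
    unfolding infl_decomps_def
    using length_window_root window_pieces_nonempty concat_window_pieces inner first last
    by (auto simp: prod_eq_iff)
qed

end

lemma decomp_window_if_infl_decomps:
  "(us, v) \<in> infl_decomps \<theta> w \<Longrightarrow> 0 < m \<Longrightarrow> i + m \<le> length w \<Longrightarrow> decomp_window us v i m"
  unfolding infl_decomps_def by unfold_locales auto

lemma induced_decomp_eq_iff:
  assumes "decomp_window us1 v1 i m" "decomp_window us2 v2 i m" "concat us1 = concat us2"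
  shows "induced_decomp (us1, v1) i m = induced_decomp (us2, v2) i m \<longleftrightarrow>
    (\<forall>j<m. root_letter (us1, v1) (i + j) = root_letter (us2, v2) (i + j)) \<and>
    (\<forall>j. 0 < j \<and> j < m \<longrightarrow> is_piece_start us1 (i + j) = is_piece_start us2 (i + j))"
proof -
  interpret W1: decomp_window us1 v1 i m by (fact assms(1))
  interpret W2: decomp_window us2 v2 i m by (fact assms(2))
  show ?thesis
  proof
    assume "induced_decomp (us1, v1) i m = induced_decomp (us2, v2) i m"
    then show "(\<forall>j<m. root_letter (us1, v1) (i + j) = root_letter (us2, v2) (i + j)) \<and>
      (\<forall>j. 0 < j \<and> j < m \<longrightarrow> is_piece_start us1 (i + j) = is_piece_start us2 (i + j))"
      using W1.root_letter_induced_decomp W2.root_letter_induced_decomp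
        W1.is_piece_start_window_pieces W2.is_piece_start_window_pieces
      by (metis not_gr0)
  next
    assume agree: "(\<forall>j<m. root_letter (us1, v1) (i + j) = root_letter (us2, v2) (i + j)) \<and>
      (\<forall>j. 0 < j \<and> j < m \<longrightarrow> is_piece_start us1 (i + j) = is_piece_start us2 (i + j))"
    have "W1.window_pieces = W2.window_pieces \<and> W1.window_root = W2.window_root"
    proof (rule decomp_eq_if_same_starts_and_roots)
      show "[] \<notin> set W1.window_pieces" "[] \<notin> set W2.window_pieces"
        "length W1.window_root = length W1.window_pieces"
        "length W2.window_root = length W2.window_pieces"
        by (fact W1.window_pieces_nonempty W2.window_pieces_nonempty
            W1.length_window_root W2.length_window_root)+
      show "concat W1.window_pieces = concat W2.window_pieces"
        using W1.concat_window_pieces W2.concat_window_pieces assms(3) by simp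
      show "\<forall>j<length (concat W1.window_pieces).
          is_piece_start W1.window_pieces j = is_piece_start W2.window_pieces j \<and>
          root_letter (W1.window_pieces, W1.window_root) j =
          root_letter (W2.window_pieces, W2.window_root) j"
        using W1.root_letter_induced_decomp W2.root_letter_induced_decomp
          W1.is_piece_start_window_pieces W2.is_piece_start_window_pieces
          W1.length_concat_window_pieces agree
        by (metis not_gr0 prod.collapse)
    qed
    then show "induced_decomp (us1, v1) i m = induced_decomp (us2, v2) i m"
      by (simp add: prod_eq_iff)
  qed
qed

lemma recognisable_radius_iff_roots_and_starts:
  assumes "u \<noteq> []"
  shows "recognisable_radius \<theta> u N \<longleftrightarrow>
    (\<forall>ul ur. length ul = N \<longrightarrow> length ur = N \<longrightarrow> legal \<theta> (ul @ u @ ur) \<longrightarrow>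
      (\<forall>d1\<in>infl_decomps \<theta> (ul @ u @ ur). \<forall>d2\<in>infl_decomps \<theta> (ul @ u @ ur).
        \<forall>j<length u. root_letter d1 (N + j) = root_letter d2 (N + j) \<and>
          (0 < j \<longrightarrow> is_piece_start (fst d1) (N + j) = is_piece_start (fst d2) (N + j))))"
proof -
  have "induced_decomp d1 N (length u) = induced_decomp d2 N (length u) \<longleftrightarrow>
      (\<forall>j<length u. root_letter d1 (N + j) = root_letter d2 (N + j) \<and>
        (0 < j \<longrightarrow> is_piece_start (fst d1) (N + j) = is_piece_start (fst d2) (N + j)))"
    if "length ul = N" "length ur = N" "d1 \<in> infl_decomps \<theta> (ul @ u @ ur)"
      "d2 \<in> infl_decomps \<theta> (ul @ u @ ur)" for ul ur d1 d2
  proof -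
    have "decomp_window (fst d) (snd d) N (length u)" "concat (fst d) = ul @ u @ ur"
      if "d \<in> infl_decomps \<theta> (ul @ u @ ur)" for d
      using that decomp_window_if_infl_decomps[of "fst d" "snd d" \<theta> "ul @ u @ ur"] assms
        \<open>length ul = N\<close>
      by (auto simp: infl_decomps_def)
    then show ?thesis
      using induced_decomp_eq_iff[of "fst d1" "snd d1" N "length u" "fst d2" "snd d2"] that
      by auto
  qed
  then show ?thesis unfolding recognisable_radius_def by (intro iff_allI) blast
qed

section \<open>Labellings\<close>

text \<open>A label \<open>(a, t, r)\<close> at position \<open>j\<close> of a sequence \<open>x\<close> records that \<open>x j\<close> is the
  \<open>r\<close>-th letter of the inflation word \<open>t \<in> \<theta> a\<close>; a labelling is thus an inflation word
  decomposition written position by position.\<close>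
type_synonym 'a label = "'a \<times> 'a list \<times> nat"

definition label_fits :: "('a \<Rightarrow> 'a list set) \<Rightarrow> (int \<Rightarrow> 'a) \<Rightarrow> (int \<Rightarrow> 'a label) \<Rightarrow> int \<Rightarrow> bool"
  where "label_fits \<theta> x l j \<longleftrightarrow> (case l j of (a, t, r) \<Rightarrow> t \<in> \<theta> a \<and> r < length t \<and> x j = t ! r)"

definition label_step :: "(int \<Rightarrow> 'a label) \<Rightarrow> int \<Rightarrow> bool" where
  "label_step l j \<longleftrightarrow> (case l j of (a, t, r) \<Rightarrow> case l (j + 1) of (a', t', r') \<Rightarrow>
      (a' = a \<and> t' = t \<and> r' = Suc r) \<or> (Suc r = length t \<and> r' = 0))"

text \<open>The root letters of the tiles meeting the window \<open>[p, p + n)\<close>, read off at its first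
  position and at every tile start.\<close>
definition root_word :: "(int \<Rightarrow> 'a label) \<Rightarrow> int \<Rightarrow> nat \<Rightarrow> 'a list" where
  "root_word l p n = map (\<lambda>i. fst (l (p + int i)))
     (filter (\<lambda>i. i = 0 \<or> snd (snd (l (p + int i))) = 0) [0..<n])"

definition labelled_window ::
  "('a \<Rightarrow> 'a list set) \<Rightarrow> (int \<Rightarrow> 'a) \<Rightarrow> (int \<Rightarrow> 'a label) \<Rightarrow> int \<Rightarrow> nat \<Rightarrow> bool" where
  "labelled_window \<theta> x l p n \<longleftrightarrow> (\<forall>j. p \<le> j \<and> j < p + int n \<longrightarrow> label_fits \<theta> x l j) \<and>
     (\<forall>j. p \<le> j \<and> j + 1 < p + int n \<longrightarrow> label_step l j) \<and>
     (\<forall>q k. p \<le> q \<and> q + int k \<le> p + int n \<longrightarrow> legal \<theta> (root_word l q k))"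

locale labelling =
  fixes \<theta> :: "'a \<Rightarrow> 'a list set" and x :: "int \<Rightarrow> 'a" and l :: "int \<Rightarrow> 'a label"
  assumes label_fits: "label_fits \<theta> x l j" and label_step: "label_step l j"
    and legal_root_word: "legal \<theta> (root_word l q k)"

lemma root_word_0 [simp]: "root_word l p 0 = []"
  by (simp add: root_word_def)

lemma root_word_Suc: "root_word l p (Suc k) = root_word l p k @
   (if k = 0 \<or> snd (snd (l (p + int k))) = 0 then [fst (l (p + int k))] else [])"
  by (simp add: root_word_def)

lemma root_word_cong:
  assumes "\<And>j. p \<le> j \<Longrightarrow> j < p + int k \<Longrightarrow> l j = l' j"
  shows "root_word l p k = root_word l' p k"
proof -
  have "filter (\<lambda>i. i = 0 \<or> snd (snd (l (p + int i))) = 0) [0..<k] =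
        filter (\<lambda>i. i = 0 \<or> snd (snd (l' (p + int i))) = 0) [0..<k]"
    by (rule filter_cong) (auto simp: assms)
  then show ?thesis unfolding root_word_def by (auto intro!: map_cong simp: assms)
qed

lemma root_word_shift: "root_word (\<lambda>j. l (j + d)) p k = root_word l (p + d) k"
  by (simp add: root_word_def algebra_simps)

lemma root_word_append_tile:
  assumes "snd (snd (l (p + int D))) = 0"
    and "\<And>i. 0 < i \<Longrightarrow> i < L \<Longrightarrow> snd (snd (l (p + int D + int i))) \<noteq> 0" and "0 < L"
  shows "root_word l p (D + L) = root_word l p D @ [fst (l (p + int D))]"
proof -
  have "root_word l p (D + k) = root_word l p D @ (if k = 0 then [] else [fst (l (p + int D))])"
    if "k \<le> L" for k
    using that
  proof (induction k)
    case (Suc k)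
    then show ?case using assms(1) assms(2)[of k] by (auto simp: root_word_Suc add.assoc)
  qed simp
  then show ?thesis using assms(3) by simp
qed

lemma labelled_window_cong:
  assumes "labelled_window \<theta> x l p n"
    and "\<And>j. p \<le> j \<Longrightarrow> j < p + int n \<Longrightarrow> x j = x' j \<and> l j = l' j"
  shows "labelled_window \<theta> x' l' p n"
  unfolding labelled_window_def
proof (intro conjI allI impI)
  fix j assume j: "p \<le> j \<and> j < p + int n"
  then have "label_fits \<theta> x l j" using assms(1) unfolding labelled_window_def by blast
  then show "label_fits \<theta> x' l' j" using assms(2)[of j] j unfolding label_fits_def by auto
next
  fix j assume j: "p \<le> j \<and> j + 1 < p + int n"
  then have "label_step l j" using assms(1) unfolding labelled_window_def by blast
  then show "label_step l' j" using assms(2)[of j] assms(2)[of "j + 1"] j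
    unfolding label_step_def by auto
next
  fix q k assume qk: "p \<le> q \<and> q + int k \<le> p + int n"
  then have "legal \<theta> (root_word l q k)" using assms(1) unfolding labelled_window_def by blast
  moreover have "root_word l q k = root_word l' q k"
    using qk assms(2) by (intro root_word_cong) auto
  ultimately show "legal \<theta> (root_word l' q k)" by simp
qed

lemma labelled_window_mono:
  assumes "labelled_window \<theta> x l p n" "p \<le> p'" "p' + int n' \<le> p + int n"
  shows "labelled_window \<theta> x l p' n'"
  using assms unfolding labelled_window_def
  by (smt (verit, ccfv_SIG))

lemma labelled_window_shift:
  assumes "labelled_window \<theta> x l p n"
  shows "labelled_window \<theta> (\<lambda>j. x (j + d)) (\<lambda>j. l (j + d)) (p - d) n"
  unfolding labelled_window_def
proof (intro conjI allI impI)
  fix j assume "p - d \<le> j \<and> j < p - d + int n"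
  then have "label_fits \<theta> x l (j + d)" using assms unfolding labelled_window_def by simp
  then show "label_fits \<theta> (\<lambda>j. x (j + d)) (\<lambda>j. l (j + d)) j" unfolding label_fits_def by simp
next
  fix j assume "p - d \<le> j \<and> j + 1 < p - d + int n"
  then have "label_step l (j + d)" using assms unfolding labelled_window_def by simp
  then show "label_step (\<lambda>j. l (j + d)) j" unfolding label_step_def by (simp add: algebra_simps)
next
  fix q k assume "p - d \<le> q \<and> q + int k \<le> p - d + int n"
  then have "legal \<theta> (root_word l (q + d) k)" using assms unfolding labelled_window_def by simp
  then show "legal \<theta> (root_word (\<lambda>j. l (j + d)) q k)" by (simp add: root_word_shift)
qed

lemma labelling_iff_labelled_windows: "labelling \<theta> x l \<longleftrightarrow> (\<forall>p n. labelled_window \<theta> x l p n)"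
proof
  assume "labelling \<theta> x l"
  then show "\<forall>p n. labelled_window \<theta> x l p n"
    unfolding labelling_def labelled_window_def by blast
next
  assume H: "\<forall>p n. labelled_window \<theta> x l p n"
  have "label_fits \<theta> x l j" for j using H[rule_format, of j 1] unfolding labelled_window_def by simp
  moreover have "label_step l j" for j
    using H[rule_format, of j 2] unfolding labelled_window_def by simp
  moreover have "legal \<theta> (root_word l q k)" for q k
    using H[rule_format, of q k] unfolding labelled_window_def by simp
  ultimately show "labelling \<theta> x l" unfolding labelling_def by blast
qed

locale padded_decomp =
  fixes \<theta> :: "'a \<Rightarrow> 'a list set" and us :: "'a list list" and v :: "'a list"
    and T :: "nat \<Rightarrow> 'a list" and E :: "nat \<Rightarrow> nat"
  assumes pieces_nonempty: "[] \<notin> set us" and length_root: "length v = length us"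
    and tile_in: "q < length us \<Longrightarrow> T q \<in> \<theta> (v ! q)"
    and piece_in_tile: "q < length us \<Longrightarrow> k < length (us ! q) \<Longrightarrow> us ! q ! k = T q ! (k + E q)"
    and piece_fits: "q < length us \<Longrightarrow> E q + length (us ! q) \<le> length (T q)"
    and piece_ends_tile: "Suc q < length us \<Longrightarrow> E q + length (us ! q) = length (T q)"
    and offset_0: "0 < q \<Longrightarrow> E q = 0"
    and root_legal: "legal \<theta> v"
begin

definition decomp_label :: "int \<Rightarrow> 'a label" where
  "decomp_label j = (let q = piece_idx us (nat j) in (v ! q, T q, nat j - piece_start us q + E q))"

lemma decomp_label_nat:
  "decomp_label (int n) =
    (v ! piece_idx us n, T (piece_idx us n),
     n - piece_start us (piece_idx us n) + E (piece_idx us n))"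
  by (simp add: decomp_label_def Let_def)

lemma fst_decomp_label: "fst (decomp_label (int j)) = root_letter (us, v) j"
  by (simp add: decomp_label_nat root_letter_def)

lemma decomp_label_start_iff:
  assumes "0 < j" "j < length (concat us)"
  shows "snd (snd (decomp_label (int j))) = 0 \<longleftrightarrow> is_piece_start us j"
  using is_piece_start_iff[OF pieces_nonempty assms(2)] piece_idx_bounds[OF assms(2)] assms
    offset_0[of "piece_idx us j"]
  by (cases "piece_idx us j = 0") (auto simp: decomp_label_nat)

lemma decomp_label_fits:
  assumes "n < length (concat us)"
  shows "label_fits \<theta> (\<lambda>j. concat us ! nat j) decomp_label (int n)"
proof -
  define q where "q = piece_idx us n"
  note r = piece_idx_bounds[OF assms, folded q_def]
  have k: "n - piece_start us q < length (us ! q)" using r piece_start_Suc[OF r(1)] by simp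
  have "concat us ! n = T q ! (n - piece_start us q + E q)"
    using concat_nth_piece_idx[OF assms] piece_in_tile[OF r(1) k] unfolding q_def by simp
  moreover have "n - piece_start us q + E q < length (T q)" using piece_fits[OF r(1)] k by linarith
  ultimately show ?thesis
    using tile_in[OF r(1)] unfolding label_fits_def decomp_label_nat q_def[symmetric] by simp
qed

lemma decomp_label_step:
  assumes n: "Suc n < length (concat us)"
  shows "label_step decomp_label (int n)"
proof -
  define q where "q = piece_idx us n"
  have r: "q < length us" "piece_start us q \<le> n" "n < piece_start us (Suc q)"
    using piece_idx_bounds[of n us] n unfolding q_def by auto
  have label_n: "decomp_label (int n) = (v ! q, T q, n - piece_start us q + E q)"
    by (simp add: decomp_label_nat q_def)
  have int_Suc: "int n + 1 = int (Suc n)" by simp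
  show ?thesis
  proof (cases "is_piece_start us (Suc n)")
    case False
    then have "piece_idx us (Suc n) = q"
      using piece_idx_Suc_cases[OF pieces_nonempty n] unfolding q_def by simp
    then have "decomp_label (int n + 1) = (v ! q, T q, Suc (n - piece_start us q + E q))"
      unfolding int_Suc decomp_label_nat using r(2) by (simp add: Suc_diff_le)
    then show ?thesis unfolding label_step_def label_n by simp
  next
    case True
    then have q': "piece_idx us (Suc n) = Suc q"
      using piece_idx_Suc_cases[OF pieces_nonempty n] unfolding q_def by simp
    then have start: "piece_start us (Suc q) = Suc n" and Sq: "Suc q < length us"
      using True is_piece_start_iff[OF pieces_nonempty n] piece_idx_bounds[OF n] by auto
    then have "decomp_label (int n + 1) = (v ! Suc q, T (Suc q), 0)"
      unfolding int_Suc decomp_label_nat q' using offset_0[of "Suc q"] by simp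
    moreover have "Suc (n - piece_start us q + E q) = length (T q)"
      using piece_ends_tile[OF Sq] piece_start_Suc[OF r(1)] start r(2) by linarith
    ultimately show ?thesis unfolding label_step_def label_n by simp
  qed
qed

lemma root_word_decomp_label:
  "0 < k \<Longrightarrow> p + k \<le> length (concat us) \<Longrightarrow>
    root_word decomp_label (int p) k =
      map (nth v) [piece_idx us p..<Suc (piece_idx us (p + k - 1))]"
proof (induction k)
  case (Suc k)
  show ?case
  proof (cases "k = 0")
    case True
    then show ?thesis by (simp add: root_word_Suc decomp_label_nat)
  next
    case False
    have n: "Suc (p + k - 1) < length (concat us)" "Suc (p + k - 1) = p + k"
      using False Suc.prems by auto
    have "piece_idx us p \<le> piece_idx us (p + k - 1)" using n False by (intro piece_idx_mono) auto
    then show ?thesis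
      using Suc False piece_idx_Suc_cases[OF pieces_nonempty n(1)] n(2)
        decomp_label_start_iff[of "p + k"]
      by (auto simp: root_word_Suc decomp_label_nat simp flip: of_nat_add)
  qed
qed simp

lemma legal_root_word_decomp_label:
  assumes "p + k \<le> length (concat us)"
  shows "legal \<theta> (root_word decomp_label (int p) k)"
proof (cases "k = 0")
  case True
  then show ?thesis using legal_sublist[OF root_legal] by simp
next
  case False
  have "piece_idx us (p + k - 1) < length v"
    using piece_idx_bounds(1)[of "p + k - 1" us] assms False length_root by simp
  then have "map (nth v) [piece_idx us p..<Suc (piece_idx us (p + k - 1))] =
      take (Suc (piece_idx us (p + k - 1)) - piece_idx us p) (drop (piece_idx us p) v)"
    by (intro nth_equalityI) (auto simp del: upt_Suc)
  then show ?thesis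
    using root_word_decomp_label[of k p] False assms legal_take_drop[OF root_legal] by simp
qed

lemma labelled_window_decomp_label:
  "labelled_window \<theta> (\<lambda>j. concat us ! nat j) decomp_label 0 (length (concat us))"
  unfolding labelled_window_def
proof (intro conjI allI impI)
  fix j :: int assume "0 \<le> j \<and> j < 0 + int (length (concat us))"
  then show "label_fits \<theta> (\<lambda>j. concat us ! nat j) decomp_label j"
    using decomp_label_fits[of "nat j"] by (simp add: nat_less_iff)
next
  fix j :: int assume "0 \<le> j \<and> j + 1 < 0 + int (length (concat us))"
  then have "Suc (nat j) < length (concat us)" "int (nat j) = j" by linarith+
  then show "label_step decomp_label j" using decomp_label_step[of "nat j"] by simp
next
  fix q :: int and k assume "0 \<le> q \<and> q + int k \<le> 0 + int (length (concat us))"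
  then have "nat q + k \<le> length (concat us)" "int (nat q) = q" by linarith+
  then show "legal \<theta> (root_word decomp_label q k)"
    using legal_root_word_decomp_label[of "nat q" k] by simp
qed

end

definition max_infl_length :: "('a \<Rightarrow> 'a list set) \<Rightarrow> nat" where
  "max_infl_length \<theta> = Max (length ` (\<Union>a. \<theta> a))"

lemma random_subst_word_nonempty: "random_subst \<theta> \<Longrightarrow> t \<in> \<theta> a \<Longrightarrow> t \<noteq> []"
  unfolding random_subst_def by blast

lemma length_le_max_infl_length:
  fixes \<theta> :: "'a::finite \<Rightarrow> 'a list set"
  assumes "random_subst \<theta>" "t \<in> \<theta> a"
  shows "length t \<le> max_infl_length \<theta>"
proof -
  have "finite (\<Union>a. \<theta> a)" using assms(1) unfolding random_subst_def by simp
  then show ?thesis unfolding max_infl_length_def using assms(2) by (intro Max_ge) auto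
qed

lemma max_infl_length_pos:
  fixes \<theta> :: "'a::finite \<Rightarrow> 'a list set"
  assumes "random_subst \<theta>"
  shows "0 < max_infl_length \<theta>"
proof -
  obtain t where t: "t \<in> \<theta> undefined" using assms unfolding random_subst_def by blast
  then show ?thesis
    using length_le_max_infl_length[OF assms t] random_subst_word_nonempty[OF assms t]
    by (cases t) auto
qed

lemma infl_decomp_two_pieces:
  fixes \<theta> :: "'a::finite \<Rightarrow> 'a list set"
  assumes rs: "random_subst \<theta>" and d: "(us, v) \<in> infl_decomps \<theta> w"
    and long: "max_infl_length \<theta> < length w"
  shows "2 \<le> length us"
proof (rule ccontr)
  assume "\<not> 2 \<le> length us"
  moreover have "us \<noteq> []" using d long by (auto simp: infl_decomps_def)
  ultimately obtain p where p: "us = [p]" by (cases us) (auto simp: Suc_le_eq)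
  then obtain t where t: "t \<in> \<theta> (v ! 0)" "suffix w t" using d by (auto simp: infl_decomps_def)
  have "length w \<le> max_infl_length \<theta>"
    using suffix_length_le[OF t(2)] length_le_max_infl_length[OF rs t(1)] by simp
  then show False using long by simp
qed

lemma labelled_window_of_substitution:
  assumes rs: "random_subst \<theta>" and "length v = length us"
    and "\<forall>q<length us. us ! q \<in> \<theta> (v ! q)" and "legal \<theta> v"
  shows "\<exists>l. labelled_window \<theta> (\<lambda>j. concat us ! nat j) l 0 (length (concat us))"
proof -
  have "[] \<notin> set us" using assms random_subst_word_nonempty[OF rs] by (metis in_set_conv_nth)
  then interpret padded_decomp \<theta> us v "\<lambda>q. us ! q" "\<lambda>q. 0"
    using assms by unfold_locales auto
  show ?thesis using labelled_window_decomp_label by blast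
qed

lemma labelled_window_of_infl_decomp:
  fixes \<theta> :: "'a::finite \<Rightarrow> 'a list set"
  assumes rs: "random_subst \<theta>" and d: "(us, v) \<in> infl_decomps \<theta> w"
    and long: "max_infl_length \<theta> < length w"
  shows "\<exists>l. labelled_window \<theta> (\<lambda>j. w ! nat j) l 0 (length w) \<and>
     (\<forall>j. 0 < j \<and> j < length w \<longrightarrow> (snd (snd (l (int j))) = 0 \<longleftrightarrow> is_piece_start us j)) \<and>
     (\<forall>j<length w. fst (l (int j)) = root_letter (us, v) j)"
proof -
  have two: "2 \<le> length us" by (rule infl_decomp_two_pieces[OF rs d long])
  have D: "length v = length us" "[] \<notin> set us" "concat us = w" "legal \<theta> v"
    "\<forall>i. 0 < i \<and> i + 1 < length us \<longrightarrow> us ! i \<in> \<theta> (v ! i)"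
    "\<exists>t\<in>\<theta> (v ! 0). suffix (us ! 0) t"
    "\<exists>t\<in>\<theta> (v ! (length us - 1)). prefix (us ! (length us - 1)) t"
    using d two unfolding infl_decomps_def by auto
  obtain pre t1 where t1: "t1 \<in> \<theta> (v ! 0)" "t1 = pre @ us ! 0"
    using D(6) unfolding suffix_def by blast
  obtain suf t2 where t2: "t2 \<in> \<theta> (v ! (length us - 1))" "t2 = us ! (length us - 1) @ suf"
    using D(7) unfolding prefix_def by blast
  define T where "T q = (if q = 0 then t1 else if q = length us - 1 then t2 else us ! q)"
    for q :: nat
  define E where "E q = (if q = 0 then length pre else 0)" for q :: nat
  interpret padded_decomp \<theta> us v T E
  proof unfold_locales
    fix q assume "q < length us"
    then show "T q \<in> \<theta> (v ! q)" using t1 t2 D(5) by (auto simp: T_def)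
  qed (use D t1 t2 two in \<open>auto simp: T_def E_def nth_append\<close>)
  show ?thesis
    using labelled_window_decomp_label decomp_label_start_iff fst_decomp_label D(3) by blast
qed

lemma legal_word_labelled_window:
  assumes rs: "random_subst \<theta>" and legal: "legal \<theta> W" and two: "2 \<le> length W"
  shows "\<exists>l. labelled_window \<theta> (\<lambda>j. W ! nat j) l 0 (length W)"
proof -
  obtain p a z where z: "z \<in> subst_pow \<theta> p [a]" "sublist W z"
    using legal unfolding legal_def by blast
  have "p \<noteq> 0"
  proof
    assume "p = 0"
    then have "length W \<le> 1" using z sublist_length_le by fastforce
    then show False using two by simp
  qed
  then obtain p' where "p = Suc p'" using not0_implies_Suc by blast
  then obtain v where v: "v \<in> subst_pow \<theta> p' [a]" "z \<in> subst_word \<theta> v" using z by auto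
  obtain us where us: "z = concat us" "list_all2 (\<lambda>u a. u \<in> \<theta> a) us v"
    using v(2) unfolding subst_word_def by blast
  have "legal \<theta> v" unfolding legal_def using v(1) by blast
  then obtain l where l: "labelled_window \<theta> (\<lambda>j. z ! nat j) l 0 (length z)"
    using labelled_window_of_substitution[OF rs] us list_all2_lengthD list_all2_nthD by metis
  obtain pr sf where z_split: "z = pr @ W @ sf" using z(2) unfolding sublist_def by blast
  have "labelled_window \<theta> (\<lambda>j. z ! nat j) l (int (length pr)) (length W)"
    by (rule labelled_window_mono[OF l]) (use z_split in auto)
  then have "labelled_window \<theta> (\<lambda>j. z ! nat (j + int (length pr))) (\<lambda>j. l (j + int (length pr)))
      0 (length W)"
    using labelled_window_shift[where d = "int (length pr)"] by fastforce
  then have "labelled_window \<theta> (\<lambda>j. W ! nat j) (\<lambda>j. l (j + int (length pr))) 0 (length W)"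
    by (rule labelled_window_cong) (simp add: z_split nth_append nat_add_distrib nat_less_iff)
  then show ?thesis by blast
qed

section \<open>Compactness\<close>

lemma infinite_subset_agreeing_on_window:
  fixes F :: "nat \<Rightarrow> int \<Rightarrow> 'b"
  assumes fin: "finite B" and in_B: "\<And>n j. F n j \<in> B" and A: "infinite A"
  shows "\<exists>A'\<subseteq>A. infinite A' \<and> (\<forall>n\<in>A'. \<forall>n'\<in>A'. \<forall>j. \<bar>j\<bar> \<le> int m \<longrightarrow> F n j = F n' j)"
proof -
  define r where "r n = map (\<lambda>i. F n (int i - int m)) [0..<2*m+1]" for n
  have "r ` A \<subseteq> {xs. set xs \<subseteq> B \<and> length xs = 2*m+1}" using in_B unfolding r_def by auto
  then have "finite (r ` A)" by (rule finite_subset[OF _ finite_lists_length_eq[OF fin]])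
  then obtain n0 where n0: "infinite {n\<in>A. r n = r n0}"
    using pigeonhole_infinite[OF A] by blast
  have agree: "F n j = F n' j" if "r n = r n'" "\<bar>j\<bar> \<le> int m" for n n' j
  proof -
    define i where "i = nat (j + int m)"
    have i: "i < 2 * m + 1" "j = int i - int m" using that(2) unfolding i_def by linarith+
    have "r n ! i = r n' ! i" using that(1) by simp
    then show ?thesis using i unfolding r_def by (simp del: upt_Suc)
  qed
  have "\<forall>n\<in>{n\<in>A. r n = r n0}. \<forall>n'\<in>{n\<in>A. r n = r n0}. \<forall>j. \<bar>j\<bar> \<le> int m \<longrightarrow> F n j = F n' j"
    using agree by (metis (mono_tags, lifting) mem_Collect_eq)
  moreover have "{n\<in>A. r n = r n0} \<subseteq> A" by blast
  ultimately show ?thesis using n0 by blast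
qed

text \<open>Compactness of \<open>B\<^sup>\<int>\<close> for finite \<open>B\<close> (Koenig's lemma).\<close>
lemma finite_valued_seq_has_cluster_point:
  fixes F :: "nat \<Rightarrow> int \<Rightarrow> 'b"
  assumes fin: "finite B" and in_B: "\<And>n j. F n j \<in> B"
  shows "\<exists>g. \<forall>m. \<exists>n\<ge>m. \<forall>j. \<bar>j\<bar> \<le> int m \<longrightarrow> F n j = g j"
proof -
  define P where "P m A \<longleftrightarrow> infinite A \<and> (\<forall>n\<in>A. \<forall>n'\<in>A. \<forall>j. \<bar>j\<bar> \<le> int m \<longrightarrow> F n j = F n' j)"
    for m and A :: "nat set"
  have "\<exists>S. \<forall>m. P m (S m) \<and> S (Suc m) \<subseteq> S m"
  proof (rule dependent_nat_choice[where P = P and Q = "\<lambda>_ A A'. A' \<subseteq> A"])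
    show "\<exists>A. P 0 A"
      using infinite_subset_agreeing_on_window[OF fin in_B infinite_UNIV_nat, of 0]
      unfolding P_def by meson
    show "\<exists>A'. P (Suc m) A' \<and> A' \<subseteq> A" if "P m A" for A m
      using infinite_subset_agreeing_on_window[OF fin in_B, of A "Suc m"] that
      unfolding P_def by meson
  qed
  then obtain S where S: "\<And>m. P m (S m)" "\<And>m. S (Suc m) \<subseteq> S m" by blast
  have S_antimono: "S m \<subseteq> S k" if "k \<le> m" for k m
    using that by (rule lift_Suc_antimono_le[of S, OF S(2)])
  define pick where "pick m = (SOME n. n \<in> S m)" for m
  have pick: "pick m \<in> S m" for m
    using S(1)[of m] unfolding P_def pick_def by (metis finite.emptyI some_in_eq)
  define g where "g j = F (pick (nat \<bar>j\<bar>)) j" for j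
  have "\<exists>n\<ge>m. \<forall>j. \<bar>j\<bar> \<le> int m \<longrightarrow> F n j = g j" for m
  proof -
    obtain n where n: "n \<in> S m" "m \<le> n"
      using S(1)[of m] unfolding P_def
      by (meson finite_lessThan finite_subset not_le subsetI lessThan_iff)
    have "F n j = g j" if "\<bar>j\<bar> \<le> int m" for j
    proof -
      have "nat \<bar>j\<bar> \<le> m" using that by linarith
      then have "n \<in> S (nat \<bar>j\<bar>)" using S_antimono n(1) by blast
      moreover have "\<bar>j\<bar> \<le> int (nat \<bar>j\<bar>)" by simp
      ultimately show ?thesis using S(1)[of "nat \<bar>j\<bar>"] pick[of "nat \<bar>j\<bar>"]
        unfolding P_def g_def by blast
    qed
    then show ?thesis using n(2) by blast
  qed
  then show ?thesis by blast
qed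

definition label_set :: "('a \<Rightarrow> 'a list set) \<Rightarrow> 'a label set" where
  "label_set \<theta> = {(a, t, r). t \<in> \<theta> a \<and> r < length t}"

lemma finite_label_set:
  fixes \<theta> :: "'a::finite \<Rightarrow> 'a list set"
  assumes rs: "random_subst \<theta>"
  shows "finite (label_set \<theta>)"
proof -
  have "label_set \<theta> \<subseteq> UNIV \<times> (\<Union>a. \<theta> a) \<times> {..<max_infl_length \<theta>}"
    unfolding label_set_def using length_le_max_infl_length[OF rs] by (auto intro: less_le_trans)
  moreover have "finite ((UNIV :: 'a set) \<times> (\<Union>a. \<theta> a) \<times> {..<max_infl_length \<theta>})"
    using rs unfolding random_subst_def by simp
  ultimately show ?thesis by (rule finite_subset)
qed

lemma labelled_window_in_label_set:
  "labelled_window \<theta> x l p n \<Longrightarrow> p \<le> j \<Longrightarrow> j < p + int n \<Longrightarrow> l j \<in> label_set \<theta>"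
  unfolding labelled_window_def label_fits_def label_set_def by (cases "l j") auto

lemma labelling_of_labelled_windows_limit:
  assumes windows: "\<And>n. labelled_window \<theta> (X n) (L n) (- int n) (2 * n + 1)"
    and limit: "\<forall>M. \<exists>n\<ge>M. \<forall>j. \<bar>j\<bar> \<le> int M \<longrightarrow> X n j = x j \<and> L n j = l j"
  shows "labelling \<theta> x l"
  unfolding labelling_iff_labelled_windows
proof (intro allI)
  fix p n'
  define M where "M = nat \<bar>p\<bar> + n' + 1"
  obtain n where n: "M \<le> n" "\<forall>j. \<bar>j\<bar> \<le> int M \<longrightarrow> X n j = x j \<and> L n j = l j"
    using limit by blast
  have "labelled_window \<theta> (X n) (L n) p n'"
    by (rule labelled_window_mono[OF windows]) (use n(1) M_def in auto)
  then show "labelled_window \<theta> x l p n'"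
    by (rule labelled_window_cong) (use n(2) M_def in auto)
qed

lemma labelled_windows_limit:
  fixes \<theta> :: "'a::finite \<Rightarrow> 'a list set"
  assumes rs: "random_subst \<theta>"
    and windows1: "\<And>n. labelled_window \<theta> (X n) (L1 n) (- int n) (2 * n + 1)"
    and windows2: "\<And>n. labelled_window \<theta> (X n) (L2 n) (- int n) (2 * n + 1)"
  shows "\<exists>x l1 l2. labelling \<theta> x l1 \<and> labelling \<theta> x l2 \<and>
    (\<forall>M. \<exists>n\<ge>M. \<forall>j. \<bar>j\<bar> \<le> int M \<longrightarrow> X n j = x j \<and> L1 n j = l1 j \<and> L2 n j = l2 j)"
proof -
  obtain t where t: "t \<in> \<theta> undefined" using rs unfolding random_subst_def by blast
  define b where "b = (undefined :: 'a, t, 0 :: nat)"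
  define B where "B = (UNIV :: 'a set) \<times> label_set \<theta> \<times> label_set \<theta>"
  define F where
    "F n j = (if \<bar>j\<bar> \<le> int n then (X n j, L1 n j, L2 n j) else (undefined, b, b))" for n j
  have "finite B" unfolding B_def using finite_label_set[OF rs] by simp
  moreover have "F n j \<in> B" for n j
    using labelled_window_in_label_set[OF windows1, of n j]
      labelled_window_in_label_set[OF windows2, of n j]
      t random_subst_word_nonempty[OF rs t]
    by (auto simp: F_def B_def b_def label_set_def)
  ultimately obtain g where g: "\<forall>m. \<exists>n\<ge>m. \<forall>j. \<bar>j\<bar> \<le> int m \<longrightarrow> F n j = g j"
    using finite_valued_seq_has_cluster_point by blast
  have limit: "\<forall>M. \<exists>n\<ge>M. \<forall>j. \<bar>j\<bar> \<le> int M \<longrightarrow>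
      X n j = fst (g j) \<and> L1 n j = fst (snd (g j)) \<and> L2 n j = snd (snd (g j))"
  proof
    fix M
    obtain n where n: "n \<ge> M" "\<forall>j. \<bar>j\<bar> \<le> int M \<longrightarrow> F n j = g j" using g by blast
    have "g j = (X n j, L1 n j, L2 n j)" if "\<bar>j\<bar> \<le> int M" for j
      using n that by (auto simp: F_def)
    then show "\<exists>n\<ge>M. \<forall>j. \<bar>j\<bar> \<le> int M \<longrightarrow>
        X n j = fst (g j) \<and> L1 n j = fst (snd (g j)) \<and> L2 n j = snd (snd (g j))"
      using n(1) by (intro exI[of _ n]) auto
  qed
  have "labelling \<theta> (\<lambda>j. fst (g j)) (\<lambda>j. fst (snd (g j)))"
    by (rule labelling_of_labelled_windows_limit[OF windows1]) (use limit in blast)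
  moreover have "labelling \<theta> (\<lambda>j. fst (g j)) (\<lambda>j. snd (snd (g j)))"
    by (rule labelling_of_labelled_windows_limit[OF windows2]) (use limit in blast)
  ultimately show ?thesis using limit by blast
qed

section \<open>Tilings\<close>

lemma length_seq_word [simp]: "length (seq_word x s n) = n"
  by (simp add: seq_word_def)

lemma nth_seq_word [simp]: "k < n \<Longrightarrow> seq_word x s n ! k = x (s + int k)"
  by (simp add: seq_word_def)

lemma seq_word_Suc: "seq_word x s (Suc n) = seq_word x s n @ [x (s + int n)]"
  by (simp add: seq_word_def)

lemma take_drop_seq_word:
  "a + n \<le> N \<Longrightarrow> take n (drop a (seq_word x s N)) = seq_word x (s + int a) n"
  by (rule nth_equalityI) (auto simp: algebra_simps)

lemma seq_word_add: "seq_word x s (a + b) = seq_word x s a @ seq_word x (s + int a) b"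
  by (rule nth_equalityI) (auto simp: nth_append algebra_simps)

lemma sublist_seq_word:
  assumes "p \<le> i" "i + int m \<le> p + int N"
  shows "sublist (seq_word x i m) (seq_word x p N)"
proof -
  have "seq_word x i m = take m (drop (nat (i - p)) (seq_word x p N))"
    using take_drop_seq_word[of "nat (i - p)" m N x p] assms by simp
  then show ?thesis by (metis sublist_drop sublist_take sublist_order.order.trans)
qed

lemma legal_seq_word: "y \<in> subshift \<theta> \<Longrightarrow> legal \<theta> (seq_word y i n)"
  unfolding subshift_def by blast

locale tiling =
  fixes \<theta> :: "'a \<Rightarrow> 'a list set" and x y :: "int \<Rightarrow> 'a" and w :: "int \<Rightarrow> 'a list"
    and c :: "int \<Rightarrow> int"
  assumes tile_in: "w i \<in> \<theta> (y i)" and tile_nonempty: "w i \<noteq> []"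
    and tile_start_succ: "c (i + 1) = c i + int (length (w i))"
    and tile_letters: "k < length (w i) \<Longrightarrow> x (c i + int k) = w i ! k"

definition tile_idx :: "(int \<Rightarrow> int) \<Rightarrow> int \<Rightarrow> int" where
  "tile_idx c j = (THE t. c t \<le> j \<and> j < c (t + 1))"

context tiling
begin

lemma tile_start_add_ge: "c i + int n \<le> c (i + int n)"
proof (induction n)
  case (Suc n)
  have e: "i + int (Suc n) = i + int n + 1" by simp
  have "0 < length (w (i + int n))" using tile_nonempty by simp
  then show ?case using Suc tile_start_succ[of "i + int n"] unfolding e by linarith
qed simp

lemma tile_start_mono: "i \<le> i' \<Longrightarrow> c i \<le> c i'"
  using tile_start_add_ge[of i "nat (i' - i)"] by simp

lemma tile_start_strict_mono: "i < i' \<Longrightarrow> c i < c i'"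
  using tile_start_add_ge[of i "nat (i' - i)"] by simp

lemma tile_covering_position: "\<exists>t. c t \<le> j \<and> j < c (t + 1)"
proof -
  define n where "n = nat \<bar>j - c 0\<bar>"
  define T where "T = {t. - int n \<le> t \<and> t \<le> int n \<and> c t \<le> j}"
  have "c (- int n) \<le> j" using tile_start_add_ge[of "- int n" n] unfolding n_def by simp
  then have "- int n \<in> T" unfolding T_def by simp
  moreover have "finite T"
    unfolding T_def by (simp add: finite_subset[of _ "{- int n..int n}"] subset_eq)
  ultimately have t: "Max T \<in> T" by (intro Max_in) auto
  have "j < c (Max T + 1)"
  proof (rule ccontr)
    assume beyond: "\<not> j < c (Max T + 1)"
    have "Max T + 1 \<le> int n"
    proof (rule ccontr)
      assume "\<not> Max T + 1 \<le> int n"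
      then have "c (int n + 1) \<le> c (Max T + 1)" by (intro tile_start_mono) simp
      moreover have "j < c (int n + 1)"
        using tile_start_add_ge[of 0 "n + 1"] unfolding n_def by (simp add: add.commute)
      ultimately show False using beyond by simp
    qed
    then have "Max T + 1 \<in> T" using t beyond unfolding T_def by simp
    then show False using Max_ge[OF \<open>finite T\<close>, of "Max T + 1"] by simp
  qed
  then show ?thesis using t unfolding T_def by blast
qed

lemma tile_idx_eqI: "c t \<le> j \<Longrightarrow> j < c (t + 1) \<Longrightarrow> tile_idx c j = t"
proof (unfold tile_idx_def, rule the_equality)
  fix t' assume "c t \<le> j" "j < c (t + 1)" "c t' \<le> j \<and> j < c (t' + 1)"
  then show "t' = t" using tile_start_mono[of "t + 1" t'] tile_start_mono[of "t' + 1" t] by linarith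
qed simp

lemma tile_idx_bounds: "c (tile_idx c j) \<le> j" "j < c (tile_idx c j + 1)"
  using tile_covering_position[of j] tile_idx_eqI by metis+

lemma tile_idx_tile_start: "tile_idx c (c i) = i"
  using tile_start_strict_mono[of i "i + 1"] by (intro tile_idx_eqI) auto

lemma tile_idx_before_tile_start: "tile_idx c (c i - 1) = i - 1"
  using tile_start_strict_mono[of "i - 1" i] by (intro tile_idx_eqI) auto

lemma tile_idx_mono: "j \<le> j' \<Longrightarrow> tile_idx c j \<le> tile_idx c j'"
  using tile_start_mono[of "tile_idx c j' + 1" "tile_idx c j"] tile_idx_bounds[of j]
    tile_idx_bounds[of j'] by linarith

definition tile_words :: "int \<Rightarrow> nat \<Rightarrow> 'a list list" where
  "tile_words i0 m = map (\<lambda>q. w (i0 + int q)) [0..<m]"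

definition tile_roots :: "int \<Rightarrow> nat \<Rightarrow> 'a list" where
  "tile_roots i0 m = map (\<lambda>q. y (i0 + int q)) [0..<m]"

lemma concat_tile_words:
  "concat (tile_words i0 m) = seq_word x (c i0) (nat (c (i0 + int m) - c i0))"
proof (induction m)
  case (Suc m)
  have mono: "c i0 \<le> c (i0 + int m)" by (rule tile_start_mono) simp
  have e: "i0 + int (Suc m) = i0 + int m + 1" by simp
  have len: "nat (c (i0 + int (Suc m)) - c i0) =
      nat (c (i0 + int m) - c i0) + length (w (i0 + int m))"
    unfolding e tile_start_succ using mono by simp
  have tile: "seq_word x (c (i0 + int m)) (length (w (i0 + int m))) = w (i0 + int m)"
    by (rule nth_equalityI) (simp_all add: tile_letters)
  have "concat (tile_words i0 (Suc m)) = concat (tile_words i0 m) @ w (i0 + int m)"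
    by (simp add: tile_words_def)
  also have "\<dots> = seq_word x (c i0) (nat (c (i0 + int (Suc m)) - c i0))"
    unfolding len seq_word_add using Suc mono tile by simp
  finally show ?case .
qed (simp add: tile_words_def seq_word_def)

lemma length_tile_words [simp]: "length (tile_words i0 m) = m"
  by (simp add: tile_words_def)

lemma length_tile_roots [simp]: "length (tile_roots i0 m) = m"
  by (simp add: tile_roots_def)

lemma tile_words_nonempty: "[] \<notin> set (tile_words i0 m)"
  by (auto simp: tile_words_def) (metis tile_nonempty)

lemma piece_start_tile_words:
  "q \<le> m \<Longrightarrow> piece_start (tile_words i0 m) q = nat (c (i0 + int q) - c i0)"
  using concat_tile_words[of i0 q] by (simp add: piece_start_def tile_words_def take_map)

lemma piece_idx_tile_words:
  assumes j: "j < nat (c (i0 + int m) - c i0)"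
  shows "piece_idx (tile_words i0 m) j = nat (tile_idx c (c i0 + int j) - i0)"
    "i0 \<le> tile_idx c (c i0 + int j)" "tile_idx c (c i0 + int j) < i0 + int m"
proof -
  define t where "t = tile_idx c (c i0 + int j)"
  have r: "c t \<le> c i0 + int j" "c i0 + int j < c (t + 1)"
    using tile_idx_bounds unfolding t_def by auto
  show t0: "i0 \<le> tile_idx c (c i0 + int j)"
    using tile_start_mono[of "t + 1" i0] r unfolding t_def[symmetric] by linarith
  show t1: "tile_idx c (c i0 + int j) < i0 + int m"
    using tile_start_mono[of "i0 + int m" t] r j unfolding t_def[symmetric] by linarith
  define q where "q = nat (t - i0)"
  have q: "q < m" "i0 + int q = t" "i0 + int (Suc q) = t + 1"
    using t0 t1 unfolding q_def t_def by auto
  have "piece_start (tile_words i0 m) q = nat (c t - c i0)"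
    "piece_start (tile_words i0 m) (Suc q) = nat (c (t + 1) - c i0)"
    using piece_start_tile_words[of q m i0] piece_start_tile_words[of "Suc q" m i0, unfolded q(3)]
      q(1,2) by simp_all
  then have "piece_idx (tile_words i0 m) j = q"
    using r tile_start_mono[of i0 t] t0 unfolding t_def[symmetric] by (intro piece_idx_eqI) auto
  then show "piece_idx (tile_words i0 m) j = nat (tile_idx c (c i0 + int j) - i0)"
    unfolding q_def t_def .
qed

lemma is_piece_start_tile_words:
  assumes j: "j < nat (c (i0 + int m) - c i0)"
  shows "is_piece_start (tile_words i0 m) j \<longleftrightarrow> c i0 + int j \<in> range c"
proof
  assume "is_piece_start (tile_words i0 m) j"
  then obtain q where "q < m" "piece_start (tile_words i0 m) q = j"
    unfolding is_piece_start_def by auto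
  then have "c (i0 + int q) = c i0 + int j"
    using piece_start_tile_words[of q m i0] tile_start_mono[of i0 "i0 + int q"] by simp
  then show "c i0 + int j \<in> range c" by (metis rangeI)
next
  assume "c i0 + int j \<in> range c"
  then obtain t where t: "c t = c i0 + int j" by auto
  then have "tile_idx c (c i0 + int j) = t" by (metis tile_idx_tile_start)
  then have r: "piece_idx (tile_words i0 m) j = nat (t - i0)" "i0 \<le> t" "t < i0 + int m"
    using piece_idx_tile_words[OF j] by auto
  then have "piece_start (tile_words i0 m) (nat (t - i0)) = j"
    using piece_start_tile_words[of "nat (t - i0)" m i0] t by simp
  then show "is_piece_start (tile_words i0 m) j"
    unfolding is_piece_start_def using r by (intro exI[of _ "nat (t - i0)"]) auto
qed

lemma legal_tile_roots: "y \<in> subshift \<theta> \<Longrightarrow> legal \<theta> (tile_roots i0 m)"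
  using legal_seq_word[of y \<theta> i0 m] unfolding tile_roots_def seq_word_def .

lemma tile_words_in_tiles:
  "\<forall>q<length (tile_words i0 m). tile_words i0 m ! q \<in> \<theta> (tile_roots i0 m ! q)"
  by (simp add: tile_words_def tile_roots_def tile_in)

lemma long_window_meets_two_tiles:
  assumes "\<And>i. length (w i) < n"
  shows "tile_idx c P < tile_idx c (P + int n - 1)"
proof -
  have "c (tile_idx c P + 1) \<le> P + int n - 1"
    using tile_start_succ[of "tile_idx c P"] tile_idx_bounds[of P] assms[of "tile_idx c P"] by simp
  then have "tile_idx c (c (tile_idx c P + 1)) \<le> tile_idx c (P + int n - 1)"
    by (rule tile_idx_mono)
  then show ?thesis unfolding tile_idx_tile_start by simp
qed

lemma infl_decomp_of_tiling:
  assumes y: "y \<in> subshift \<theta>" and n: "\<And>i. length (w i) < n"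
  shows "\<exists>d. d \<in> infl_decomps \<theta> (seq_word x P n) \<and>
     (\<forall>j<n. root_letter d j = y (tile_idx c (P + int j))) \<and>
     (\<forall>j. 0 < j \<and> j < n \<longrightarrow> (is_piece_start (fst d) j \<longleftrightarrow> P + int j \<in> range c))"
proof -
  define i0 where "i0 = tile_idx c P"
  define i1 where "i1 = tile_idx c (P + int n - 1)"
  define m where "m = nat (i1 - i0) + 1"
  define off where "off = nat (P - c i0)"
  define Z where "Z = nat (c (i0 + int m) - c i0)"
  let ?us = "tile_words i0 m" and ?v = "tile_roots i0 m"
  have r0: "c i0 \<le> P" and r1: "P + int n - 1 < c (i1 + 1)"
    using tile_idx_bounds unfolding i0_def i1_def by auto
  have i01: "i0 < i1" unfolding i0_def i1_def by (rule long_window_meets_two_tiles[OF n])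
  have im: "i0 + int m = i1 + 1" using i01 unfolding m_def by simp
  have off: "c i0 + int off = P" using r0 unfolding off_def by simp
  have offn: "off + n \<le> Z" unfolding off_def Z_def im using r0 r1 by simp
  have n0: "0 < n" using n[of 0] by simp
  interpret decomp_window ?us ?v off n
    using tile_words_nonempty offn n0 concat_tile_words[of i0 m] unfolding Z_def
    by unfold_locales simp_all
  have window: "take n (drop off (concat ?us)) = seq_word x P n"
    unfolding concat_tile_words take_drop_seq_word[OF offn[unfolded Z_def]] off ..
  have pieces: "piece_idx ?us (off + j) = nat (tile_idx c (P + int j) - i0)"
    "i0 \<le> tile_idx c (P + int j)" "tile_idx c (P + int j) < i0 + int m" if "j < n" for j
    using piece_idx_tile_words[of "off + j" i0 m] that offn off
    unfolding Z_def by (auto simp: add.assoc)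
  have "first_piece = 0" using pieces(1)[of 0] n0 unfolding i0_def by simp
  moreover have "last_piece = nat (i1 - i0)"
    using pieces(1)[of "n - 1"] n0 unfolding i1_def by (simp add: of_nat_diff algebra_simps)
  ultimately have two: "first_piece < last_piece" using i01 by simp
  have "induced_decomp (?us, ?v) off n \<in> infl_decomps \<theta> (seq_word x P n)"
    using induced_decomp_in_infl_decomps[OF tile_words_in_tiles legal_tile_roots[OF y] two] window
    by simp
  moreover have "root_letter (induced_decomp (?us, ?v) off n) j = y (tile_idx c (P + int j))"
    if "j < n" for j
    using root_letter_induced_decomp[OF that] pieces[OF that]
    by (simp add: root_letter_def tile_roots_def)
  moreover have "is_piece_start window_pieces j \<longleftrightarrow> P + int j \<in> range c"
    if "0 < j" "j < n" for j
    using is_piece_start_window_pieces[OF that(2)] is_piece_start_tile_words[of "off + j" i0 m]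
      that offn off[symmetric] unfolding Z_def by (simp add: add.assoc)
  ultimately show ?thesis by blast
qed

end

context labelling
begin

abbreviation root_at :: "int \<Rightarrow> 'a" where "root_at j \<equiv> fst (l j)"
abbreviation tile_at :: "int \<Rightarrow> 'a list" where "tile_at j \<equiv> fst (snd (l j))"
abbreviation offset_at :: "int \<Rightarrow> nat" where "offset_at j \<equiv> snd (snd (l j))"

lemma label_at: "tile_at j \<in> \<theta> (root_at j) \<and> offset_at j < length (tile_at j) \<and>
    x j = tile_at j ! offset_at j"
  using label_fits[of j] unfolding label_fits_def by (cases "l j") auto

lemma tile_at_nonempty: "tile_at j \<noteq> []"
  using label_at[of j] by auto

lemma label_Suc_cases:
  "(root_at (j + 1) = root_at j \<and> tile_at (j + 1) = tile_at j \<and>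
      offset_at (j + 1) = Suc (offset_at j))
    \<or> (Suc (offset_at j) = length (tile_at j) \<and> offset_at (j + 1) = 0)"
  using label_step[of j] unfolding label_step_def by (cases "l j"; cases "l (j + 1)") auto

lemma labels_along_tile:
  "offset_at s = 0 \<Longrightarrow> i < length (tile_at s) \<Longrightarrow> l (s + int i) = (root_at s, tile_at s, i)"
proof (induction i)
  case (Suc i)
  then have IH: "l (s + int i) = (root_at s, tile_at s, i)" by simp
  have e: "s + int (Suc i) = s + int i + 1" by simp
  show ?case
    using label_Suc_cases[of "s + int i"] IH Suc.prems unfolding e by (auto simp: prod_eq_iff)
qed (simp add: prod_eq_iff)

lemma labels_back_to_tile_start:
  "i \<le> offset_at j \<Longrightarrow> l (j - int i) = (root_at j, tile_at j, offset_at j - i)"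
proof (induction i)
  case (Suc i)
  then have IH: "l (j - int i) = (root_at j, tile_at j, offset_at j - i)" by simp
  have e: "j - int (Suc i) + 1 = j - int i" by simp
  show ?case
    using label_Suc_cases[of "j - int (Suc i)"] IH Suc.prems unfolding e
    by (auto simp: prod_eq_iff)
qed (simp add: prod_eq_iff)

lemma tile_start_of:
  "offset_at (j - int (offset_at j)) = 0 \<and> root_at (j - int (offset_at j)) = root_at j \<and>
    tile_at (j - int (offset_at j)) = tile_at j"
  using labels_back_to_tile_start[of "offset_at j" j] by simp

lemma next_tile_start: "offset_at s = 0 \<Longrightarrow> offset_at (s + int (length (tile_at s))) = 0"
proof -
  assume s: "offset_at s = 0"
  define e where "e = s + int (length (tile_at s) - 1)"
  have pos: "0 < length (tile_at s)" using tile_at_nonempty by simp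
  have le: "l e = (root_at s, tile_at s, length (tile_at s) - 1)"
    unfolding e_def using labels_along_tile[OF s] pos by simp
  have e1: "e + 1 = s + int (length (tile_at s))"
    unfolding e_def using pos by (cases "length (tile_at s)") auto
  have "offset_at (e + 1) < length (tile_at (e + 1))" using label_at by blast
  then have "\<not> (tile_at (e + 1) = tile_at e \<and> offset_at (e + 1) = Suc (offset_at e))"
    using le pos by auto
  then show ?thesis using label_Suc_cases[of e] e1 by auto
qed

lemma previous_tile_start:
  assumes "offset_at s = 0"
  defines "s' \<equiv> s - int (length (tile_at (s - 1)))"
  shows "offset_at s' = 0" "s' + int (length (tile_at s')) = s"
proof -
  have e: "s - 1 + 1 = s" by simp
  have "Suc (offset_at (s - 1)) = length (tile_at (s - 1))"
    using label_Suc_cases[of "s - 1"] assms(1) unfolding e by auto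
  then have "s' = s - 1 - int (offset_at (s - 1))" unfolding s'_def by simp
  then show "offset_at s' = 0" "s' + int (length (tile_at s')) = s"
    using tile_start_of[of "s - 1"] \<open>Suc (offset_at (s - 1)) = _\<close> by auto
qed

text \<open>Tiles are numbered so that tile \<open>0\<close> covers position \<open>0\<close>; the others are reached by
  walking from tile start to tile start.\<close>
definition tile_start :: "int \<Rightarrow> int" where
  "tile_start i = (if 0 \<le> i
     then ((\<lambda>j. j + int (length (tile_at j))) ^^ nat i) (- int (offset_at 0))
     else ((\<lambda>j. j - int (length (tile_at (j - 1)))) ^^ nat (- i)) (- int (offset_at 0)))"

lemma tile_start_0: "tile_start 0 = - int (offset_at 0)"
  by (simp add: tile_start_def)

lemma offset_at_tile_start: "offset_at (tile_start i) = 0"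
proof -
  have s0: "offset_at (- int (offset_at 0)) = 0" using tile_start_of[of 0] by simp
  have "offset_at (((\<lambda>j. j + int (length (tile_at j))) ^^ n) (- int (offset_at 0))) = 0" for n
    by (induction n) (use s0 next_tile_start in auto)
  moreover have
    "offset_at (((\<lambda>j. j - int (length (tile_at (j - 1)))) ^^ n) (- int (offset_at 0))) = 0"
    for n
    by (induction n) (use s0 previous_tile_start in auto)
  ultimately show ?thesis unfolding tile_start_def by simp
qed

lemma tile_start_succ: "tile_start (i + 1) = tile_start i + int (length (tile_at (tile_start i)))"
proof (cases "0 \<le> i")
  case True
  then have "nat (i + 1) = Suc (nat i)" by simp
  then show ?thesis using True unfolding tile_start_def by simp
next
  case False
  have "tile_start i = tile_start (i + 1) - int (length (tile_at (tile_start (i + 1) - 1)))"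
  proof (cases "i + 1 = 0")
    case True
    then have "i = -1" by simp
    then show ?thesis unfolding tile_start_def by simp
  next
    case False
    then have "nat (- i) = Suc (nat (- (i + 1)))" using \<open>\<not> 0 \<le> i\<close> by simp
    then show ?thesis unfolding tile_start_def using False \<open>\<not> 0 \<le> i\<close> by simp
  qed
  then show ?thesis using previous_tile_start(2)[OF offset_at_tile_start[of "i + 1"]] by simp
qed

lemma tiling_tile_start:
  "tiling \<theta> x (\<lambda>i. root_at (tile_start i)) (\<lambda>i. tile_at (tile_start i)) tile_start"
proof
  fix i k
  show "tile_at (tile_start i) \<in> \<theta> (root_at (tile_start i))" "tile_at (tile_start i) \<noteq> []"
    using label_at tile_at_nonempty by blast+
  show "tile_start (i + 1) = tile_start i + int (length (tile_at (tile_start i)))"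
    by (rule tile_start_succ)
  assume "k < length (tile_at (tile_start i))"
  then have "l (tile_start i + int k) = (root_at (tile_start i), tile_at (tile_start i), k)"
    using labels_along_tile offset_at_tile_start by blast
  then show "x (tile_start i + int k) = tile_at (tile_start i) ! k"
    using label_at[of "tile_start i + int k"] by simp
qed

lemma seq_word_root_tile_start:
  "seq_word (\<lambda>i. root_at (tile_start i)) i n =
    root_word l (tile_start i) (nat (tile_start (i + int n) - tile_start i))"
proof (induction n)
  case (Suc n)
  interpret tiling \<theta> x "\<lambda>i. root_at (tile_start i)" "\<lambda>i. tile_at (tile_start i)" tile_start
    by (rule tiling_tile_start)
  define s where "s = tile_start (i + int n)"
  define D where "D = nat (s - tile_start i)"
  define L where "L = length (tile_at s)"
  have s: "tile_start i + int D = s"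
    unfolding D_def s_def using tile_start_mono[of i "i + int n"] by simp
  have e: "i + int (Suc n) = i + int n + 1" by simp
  have "tile_start (i + int (Suc n)) = s + int L"
    using tile_start_succ[of "i + int n"] unfolding L_def s_def e .
  then have "nat (tile_start (i + int (Suc n)) - tile_start i) = D + L" using s by simp
  moreover have "root_word l (tile_start i) (D + L) =
      root_word l (tile_start i) D @ [root_at (tile_start i + int D)]"
  proof (rule root_word_append_tile)
    show "offset_at (tile_start i + int D) = 0" using s offset_at_tile_start unfolding s_def by simp
    show "0 < L" using tile_at_nonempty unfolding L_def by simp
    fix k assume "0 < k" "k < L"
    then show "offset_at (tile_start i + int D + int k) \<noteq> 0"
      using labels_along_tile[OF offset_at_tile_start[of "i + int n"], of k] s
      unfolding L_def s_def by simp
  qed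
  ultimately show ?case using Suc s unfolding D_def s_def by (simp add: seq_word_Suc)
qed (simp add: seq_word_def)

lemma root_tile_start_in_subshift: "(\<lambda>i. root_at (tile_start i)) \<in> subshift \<theta>"
  unfolding subshift_def using seq_word_root_tile_start legal_root_word by simp

end

section \<open>Preimages\<close>

definition preimage :: "('a \<Rightarrow> 'a list set) \<Rightarrow> (int \<Rightarrow> 'a) \<Rightarrow> (int \<Rightarrow> 'a) \<Rightarrow> nat \<Rightarrow> bool" where
  "preimage \<theta> x y k \<longleftrightarrow>
     y \<in> subshift \<theta> \<and> k < infl_len \<theta> (y 0) \<and> shift_pow (- int k) x \<in> subst_seq \<theta> y"

lemma recognisable_iff_unique_preimage:
  "recognisable \<theta> \<longleftrightarrow> compatible \<theta> \<and> (\<forall>x\<in>subshift \<theta>. \<exists>!(y, k). preimage \<theta> x y k)"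
  by (simp add: recognisable_def preimage_def)

lemma infl_len_eq_length: "compatible \<theta> \<Longrightarrow> u \<in> \<theta> a \<Longrightarrow> infl_len \<theta> a = length u"
  unfolding infl_len_def compatible_def by (metis mset_eq_length someI)

lemma tiling_of_subst_seq:
  assumes rs: "random_subst \<theta>" and x: "shift_pow (- int k) x \<in> subst_seq \<theta> y"
  obtains w c where "tiling \<theta> x y w c" "c 0 = - int k"
proof -
  obtain w c where wc: "\<And>i. w i \<in> \<theta> (y i)" "c 0 = 0" "\<And>i. c (i + 1) = c i + int (length (w i))"
    "\<And>i k'. k' < length (w i) \<Longrightarrow> shift_pow (- int k) x (c i + int k') = w i ! k'"
    using x unfolding subst_seq_def by blast
  have "tiling \<theta> x y w (\<lambda>i. c i - int k)"
  proof
    fix i k'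
    show "w i \<in> \<theta> (y i)" "w i \<noteq> []" "c (i + 1) - int k = c i - int k + int (length (w i))"
      using wc random_subst_word_nonempty[OF rs wc(1)] by auto
    assume "k' < length (w i)"
    then show "x (c i - int k + int k') = w i ! k'"
      using wc(4) by (simp add: shift_pow_def algebra_simps)
  qed
  then show ?thesis using that wc(2) by simp
qed

lemma (in tiling) subst_seq_of_tiling: "shift_pow (c 0) x \<in> subst_seq \<theta> y"
  unfolding subst_seq_def shift_pow_def
  using tile_in tile_start_succ tile_letters
  by (intro CollectI exI[of _ w] exI[of _ "\<lambda>i. c i - c 0"]) (auto simp: algebra_simps)

lemma tiling_starts_eq:
  assumes T1: "tiling \<theta> x y1 w1 c1" and T2: "tiling \<theta> x y2 w2 c2"
    and covers1: "c1 0 \<le> 0" "0 < c1 1" and covers2: "c2 0 \<le> 0" "0 < c2 1"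
    and starts: "range c1 = range c2"
  shows "c1 0 = c2 0"
proof -
  have "c1 0 \<le> c2 0"
    if T1: "tiling \<theta> x y1 w1 c1" and T2: "tiling \<theta> x y2 w2 c2" and "c1 0 \<le> 0" "0 < c2 1"
      and "range c1 = range c2" for y1 w1 c1 y2 w2 c2
  proof -
    interpret T2: tiling \<theta> x y2 w2 c2 by (fact T2)
    obtain t where t: "c2 t = c1 0" using \<open>range c1 = range c2\<close> by (metis rangeE rangeI)
    then have "t < 1" using T2.tile_start_mono[of 1 t] that by linarith
    then show ?thesis using t T2.tile_start_mono[of t 0] by simp
  qed
  from this[OF T1 T2 covers1(1) covers2(2) starts] this[OF T2 T1 covers2(1) covers1(2)] starts
  show ?thesis by simp
qed

lemma tilings_eq_if_same_roots_and_starts: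
  assumes cp: "compatible \<theta>" and T1: "tiling \<theta> x y1 w1 c1" and T2: "tiling \<theta> x y2 w2 c2"
    and covers1: "c1 0 \<le> 0" "0 < c1 1" and covers2: "c2 0 \<le> 0" "0 < c2 1"
    and roots: "\<And>j. y1 (tile_idx c1 j) = y2 (tile_idx c2 j)" and starts: "range c1 = range c2"
  shows "y1 = y2 \<and> c1 = c2"
proof -
  interpret T1: tiling \<theta> x y1 w1 c1 by (fact T1)
  interpret T2: tiling \<theta> x y2 w2 c2 by (fact T2)
  have len: "c1 (i + 1) - c1 i = int (infl_len \<theta> (y1 i))"
    "c2 (i + 1) - c2 i = int (infl_len \<theta> (y2 i))"
    for i
    using T1.tile_start_succ T2.tile_start_succ infl_len_eq_length[OF cp T1.tile_in]
      infl_len_eq_length[OF cp T2.tile_in]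
    by simp_all
  have "c1 i = c2 i \<and> y1 i = y2 i" for i
  proof (induction i rule: int_induct[where k = 0])
    case base
    have "c1 0 = c2 0" by (rule tiling_starts_eq[OF T1 T2 covers1 covers2 starts])
    then show ?case using roots[of "c1 0"] T1.tile_idx_tile_start T2.tile_idx_tile_start by metis
  next
    case (step1 i)
    then have "c1 (i + 1) = c2 (i + 1)" using len[of i] by simp
    then show ?case
      using roots[of "c1 (i + 1)"] T1.tile_idx_tile_start T2.tile_idx_tile_start by metis
  next
    case (step2 i)
    then have "y1 (i - 1) = y2 (i - 1)"
      using roots[of "c1 i - 1"] T1.tile_idx_before_tile_start T2.tile_idx_before_tile_start
      by metis
    then show ?case using step2 len[of "i - 1"] by simp
  qed
  then show ?thesis by auto
qed

context labelling
begin

lemma preimage_of_labelling: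
  assumes cp: "compatible \<theta>"
  shows "preimage \<theta> x (\<lambda>i. root_at (tile_start i)) (offset_at 0)"
proof -
  interpret tiling \<theta> x "\<lambda>i. root_at (tile_start i)" "\<lambda>i. tile_at (tile_start i)" tile_start
    by (rule tiling_tile_start)
  have "offset_at 0 < length (tile_at (tile_start 0))"
    using label_at[of 0] tile_start_of[of 0] tile_start_0 by simp
  then show ?thesis
    unfolding preimage_def
    using root_tile_start_in_subshift subst_seq_of_tiling tile_start_0
      infl_len_eq_length[OF cp tile_in[of 0]]
    by simp
qed

lemma root_at_tile_start_0: "root_at (tile_start 0) = root_at 0"
  using tile_start_of[of 0] tile_start_0 by simp

end

section \<open>Local recognisability implies recognisability\<close>

lemma labelled_window_of_subshift:
  fixes \<theta> :: "'a::finite \<Rightarrow> 'a list set"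
  assumes rs: "random_subst \<theta>" and x: "x \<in> subshift \<theta>"
  shows "\<exists>l. labelled_window \<theta> x l (- int n) (2 * n + 1)"
proof -
  define W where "W = seq_word x (- int n - 1) (2 * n + 3)"
  obtain l where l: "labelled_window \<theta> (\<lambda>j. W ! nat j) l 0 (length W)"
    using legal_word_labelled_window[OF rs legal_seq_word[OF x]] unfolding W_def by fastforce
  have "labelled_window \<theta> (\<lambda>j. W ! nat j) l 1 (2 * n + 1)"
    by (rule labelled_window_mono[OF l]) (simp_all add: W_def)
  then have "labelled_window \<theta> (\<lambda>j. W ! nat (j + (int n + 1))) (\<lambda>j. l (j + (int n + 1)))
      (- int n) (2 * n + 1)"
    using labelled_window_shift[where d = "int n + 1"] by fastforce
  then have "labelled_window \<theta> x (\<lambda>j. l (j + (int n + 1))) (- int n) (2 * n + 1)"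
  proof (rule labelled_window_cong)
    fix j :: int assume "- int n \<le> j" "j < - int n + int (2 * n + 1)"
    then show "W ! nat (j + (int n + 1)) = x j \<and> l (j + (int n + 1)) = l (j + (int n + 1))"
      unfolding W_def by (simp add: nat_less_iff)
  qed
  then show ?thesis by blast
qed

lemma labelling_of_subshift:
  fixes \<theta> :: "'a::finite \<Rightarrow> 'a list set"
  assumes rs: "random_subst \<theta>" and x: "x \<in> subshift \<theta>"
  shows "\<exists>l. labelling \<theta> x l"
proof -
  obtain L where L: "\<And>n. labelled_window \<theta> x (L n) (- int n) (2 * n + 1)"
    using labelled_window_of_subshift[OF rs x] by metis
  then obtain x' l where l: "labelling \<theta> x' l" and limit: "\<forall>M. \<exists>n\<ge>M. \<forall>j. \<bar>j\<bar> \<le> int M \<longrightarrow> x j = x' j"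
    using labelled_windows_limit[OF rs L L] by blast
  have "x' = x"
  proof
    fix j
    show "x' j = x j" using limit[rule_format, of "nat \<bar>j\<bar>"] by auto
  qed
  then show ?thesis using l by blast
qed

text \<open>The window of radius \<open>max_infl_length \<theta>\<close> around \<open>j\<close> meets two tiles of each tiling;
  recognising it decides the root letter at \<open>j\<close> and whether a tile starts at \<open>j\<close>.\<close>
lemma same_roots_and_starts_if_locally_recognisable:
  fixes \<theta> :: "'a::finite \<Rightarrow> 'a list set"
  assumes rs: "random_subst \<theta>" and loc: "locally_recognisable \<theta>" and x: "x \<in> subshift \<theta>"
    and T1: "tiling \<theta> x y1 w1 c1" and y1: "y1 \<in> subshift \<theta>"
    and T2: "tiling \<theta> x y2 w2 c2" and y2: "y2 \<in> subshift \<theta>"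
  shows "y1 (tile_idx c1 j) = y2 (tile_idx c2 j) \<and> (j \<in> range c1 \<longleftrightarrow> j \<in> range c2)"
proof -
  interpret T1: tiling \<theta> x y1 w1 c1 by (fact T1)
  interpret T2: tiling \<theta> x y2 w2 c2 by (fact T2)
  define L where "L = max_infl_length \<theta>"
  have L0: "0 < L" unfolding L_def by (rule max_infl_length_pos[OF rs])
  define u where "u = seq_word x (j - int L) (2 * L + 1)"
  have u: "u \<noteq> []" "legal \<theta> u"
    unfolding u_def using legal_seq_word[OF x] by (simp_all add: seq_word_def del: upt_Suc)
  then obtain N where N: "recognisable_radius \<theta> u N"
    using loc unfolding locally_recognisable_def by blast
  define P where "P = j - int L - int N"
  define n where "n = N + (2 * L + 1) + N"
  have W: "seq_word x P N @ u @ seq_word x (j + int L + 1) N = seq_word x P n"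
    unfolding n_def seq_word_add u_def P_def by (simp add: algebra_simps)
  have long: "length (w i) < n" if "tiling \<theta> x y' w c" for y' w c i
    using length_le_max_infl_length[OF rs tiling.tile_in[OF that, of i]] unfolding n_def L_def
    by linarith
  obtain d1 where d1: "d1 \<in> infl_decomps \<theta> (seq_word x P n)"
    "\<forall>j<n. root_letter d1 j = y1 (tile_idx c1 (P + int j))"
    "\<forall>j. 0 < j \<and> j < n \<longrightarrow> (is_piece_start (fst d1) j \<longleftrightarrow> P + int j \<in> range c1)"
    using T1.infl_decomp_of_tiling[OF y1 long[OF T1]] by blast
  obtain d2 where d2: "d2 \<in> infl_decomps \<theta> (seq_word x P n)"
    "\<forall>j<n. root_letter d2 j = y2 (tile_idx c2 (P + int j))"
    "\<forall>j. 0 < j \<and> j < n \<longrightarrow> (is_piece_start (fst d2) j \<longleftrightarrow> P + int j \<in> range c2)"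
    using T2.infl_decomp_of_tiling[OF y2 long[OF T2]] by blast
  let ?ul = "seq_word x P N" and ?ur = "seq_word x (j + int L + 1) N"
  have "root_letter d1 (N + L) = root_letter d2 (N + L) \<and>
      (0 < L \<longrightarrow> is_piece_start (fst d1) (N + L) = is_piece_start (fst d2) (N + L))"
  proof (rule N[unfolded recognisable_radius_iff_roots_and_starts[OF u(1)], rule_format,
        of ?ul ?ur])
    show "length ?ul = N" "length ?ur = N" "L < length u" by (simp_all add: u_def)
    show "legal \<theta> (?ul @ u @ ?ur)" "d1 \<in> infl_decomps \<theta> (?ul @ u @ ?ur)"
      "d2 \<in> infl_decomps \<theta> (?ul @ u @ ?ur)"
      unfolding W by (fact legal_seq_word[OF x] d1(1) d2(1))+
  qed
  moreover have "P + int (N + L) = j" "N + L < n" "0 < N + L" using L0 unfolding P_def n_def by auto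
  ultimately show ?thesis
    using d1(2) d1(3) d2(2) d2(3) L0 by metis
qed

lemma preimage_unique_if_locally_recognisable:
  fixes \<theta> :: "'a::finite \<Rightarrow> 'a list set"
  assumes rs: "random_subst \<theta>" and cp: "compatible \<theta>" and loc: "locally_recognisable \<theta>"
    and x: "x \<in> subshift \<theta>" and p1: "preimage \<theta> x y1 k1" and p2: "preimage \<theta> x y2 k2"
  shows "y1 = y2 \<and> k1 = k2"
proof -
  obtain w1 c1 where T1: "tiling \<theta> x y1 w1 c1" and c1: "c1 0 = - int k1"
    using p1 tiling_of_subst_seq[OF rs] unfolding preimage_def by blast
  obtain w2 c2 where T2: "tiling \<theta> x y2 w2 c2" and c2: "c2 0 = - int k2"
    using p2 tiling_of_subst_seq[OF rs] unfolding preimage_def by blast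
  have covers: "c 0 \<le> 0" "0 < c 1"
    if "tiling \<theta> x y w c" "c 0 = - int k" "preimage \<theta> x y k" for y w c k
  proof -
    interpret tiling \<theta> x y w c by (fact that(1))
    have "k < length (w 0)"
      using that(3) infl_len_eq_length[OF cp tile_in[of 0]] unfolding preimage_def by simp
    then show "c 0 \<le> 0" "0 < c 1" using tile_start_succ[of 0] that(2) by simp_all
  qed
  have "\<And>j. y1 (tile_idx c1 j) = y2 (tile_idx c2 j)" "range c1 = range c2"
    using same_roots_and_starts_if_locally_recognisable[OF rs loc x T1 _ T2] p1 p2
    unfolding preimage_def by blast+
  then have "y1 = y2 \<and> c1 = c2"
    using tilings_eq_if_same_roots_and_starts[OF cp T1 T2 covers[OF T1 c1 p1] covers[OF T2 c2 p2]]
    by blast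
  then show ?thesis using c1 c2 by simp
qed

theorem locally_recognisable_imp_recognisable:
  fixes \<theta> :: "'a::finite \<Rightarrow> 'a list set"
  assumes rs: "random_subst \<theta>" and cp: "compatible \<theta>" and loc: "locally_recognisable \<theta>"
  shows "recognisable \<theta>"
  unfolding recognisable_iff_unique_preimage
proof (intro conjI ballI cp)
  fix x assume x: "x \<in> subshift \<theta>"
  obtain l where "labelling \<theta> x l" using labelling_of_subshift[OF rs x] by blast
  then have "\<exists>y k. preimage \<theta> x y k" using labelling.preimage_of_labelling[OF _ cp] by blast
  moreover have "y1 = y2 \<and> k1 = k2" if "preimage \<theta> x y1 k1" "preimage \<theta> x y2 k2" for y1 k1 y2 k2
    using preimage_unique_if_locally_recognisable[OF rs cp loc x that] .
  ultimately show "\<exists>!(y, k). preimage \<theta> x y k" by auto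
qed

section \<open>Recognisability implies local recognisability\<close>

definition labels_disagree :: "'a label \<Rightarrow> 'a label \<Rightarrow> bool" where
  "labels_disagree a b \<longleftrightarrow> fst a \<noteq> fst b \<or> (snd (snd a) = 0) \<noteq> (snd (snd b) = 0)"

lemma not_locally_recognisable_witness:
  assumes "\<not> locally_recognisable \<theta>"
  obtains W d1 d2 p where "legal \<theta> W" "d1 \<in> infl_decomps \<theta> W" "d2 \<in> infl_decomps \<theta> W"
    "N \<le> p" "p + N < length W"
    "root_letter d1 p \<noteq> root_letter d2 p \<or>
      0 < p \<and> is_piece_start (fst d1) p \<noteq> is_piece_start (fst d2) p"
proof -
  obtain u where u: "legal \<theta> u" "u \<noteq> []" "\<not> recognisable_radius \<theta> u N"
    using assms unfolding locally_recognisable_def by blast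
  then obtain ul ur d1 d2 j where "length ul = N" "length ur = N" "legal \<theta> (ul @ u @ ur)"
    "d1 \<in> infl_decomps \<theta> (ul @ u @ ur)" "d2 \<in> infl_decomps \<theta> (ul @ u @ ur)" "j < length u"
    "root_letter d1 (N + j) \<noteq> root_letter d2 (N + j) \<or>
      0 < j \<and> is_piece_start (fst d1) (N + j) \<noteq> is_piece_start (fst d2) (N + j)"
    unfolding recognisable_radius_iff_roots_and_starts[OF u(2)] by blast
  then show ?thesis by (intro that[of "ul @ u @ ur" d1 d2 "N + j"]) auto
qed

lemma labelled_window_recentre:
  assumes "labelled_window \<theta> (\<lambda>j. W ! nat j) l 0 (length W)" "n \<le> p" "p + n < length W"
  shows "labelled_window \<theta> (\<lambda>i. W ! nat (i + int p)) (\<lambda>i. l (i + int p)) (- int n) (2 * n + 1)"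
proof -
  have "labelled_window \<theta> (\<lambda>j. W ! nat j) l (int p - int n) (2 * n + 1)"
    by (rule labelled_window_mono[OF assms(1)]) (use assms in auto)
  then show ?thesis using labelled_window_shift[where d = "int p"] by fastforce
qed

lemma seq_word_recentre:
  assumes "n \<le> p" "p + n < length W"
  shows "seq_word (\<lambda>i. W ! nat (i + int p)) (- int n) (2 * n + 1) =
    take (2 * n + 1) (drop (p - n) W)"
proof (rule nth_equalityI)
  fix i assume "i < length (seq_word (\<lambda>i. W ! nat (i + int p)) (- int n) (2 * n + 1))"
  moreover have "nat (- int n + int i + int p) = p - n + i" using assms by linarith
  ultimately show "seq_word (\<lambda>i. W ! nat (i + int p)) (- int n) (2 * n + 1) ! i =
      take (2 * n + 1) (drop (p - n) W) ! i"
    using assms by simp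
qed (use assms in simp)

lemma labelled_windows_disagreeing_at_0:
  fixes \<theta> :: "'a::finite \<Rightarrow> 'a list set"
  assumes rs: "random_subst \<theta>" and nl: "\<not> locally_recognisable \<theta>"
  shows "\<exists>x l1 l2. labelled_window \<theta> x l1 (- int n) (2 * n + 1) \<and>
    labelled_window \<theta> x l2 (- int n) (2 * n + 1) \<and>
    legal \<theta> (seq_word x (- int n) (2 * n + 1)) \<and> labels_disagree (l1 0) (l2 0)"
proof -
  obtain W d1 d2 p where W: "legal \<theta> W" "d1 \<in> infl_decomps \<theta> W" "d2 \<in> infl_decomps \<theta> W"
    and p: "n + max_infl_length \<theta> \<le> p" "p + (n + max_infl_length \<theta>) < length W"
    and disagree: "root_letter d1 p \<noteq> root_letter d2 p \<or>
      0 < p \<and> is_piece_start (fst d1) p \<noteq> is_piece_start (fst d2) p"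
    by (rule not_locally_recognisable_witness[OF nl])
  have long: "max_infl_length \<theta> < length W" "n \<le> p" "p + n < length W" "p < length W"
    using p by auto
  obtain l1 where l1: "labelled_window \<theta> (\<lambda>j. W ! nat j) l1 0 (length W)"
    "\<forall>j. 0 < j \<and> j < length W \<longrightarrow> (snd (snd (l1 (int j))) = 0 \<longleftrightarrow> is_piece_start (fst d1) j)"
    "\<forall>j<length W. fst (l1 (int j)) = root_letter d1 j"
    using labelled_window_of_infl_decomp[OF rs _ long(1), of "fst d1" "snd d1",
        unfolded prod.collapse, OF W(2)]
    by (elim exE conjE) (rule that)
  obtain l2 where l2: "labelled_window \<theta> (\<lambda>j. W ! nat j) l2 0 (length W)"
    "\<forall>j. 0 < j \<and> j < length W \<longrightarrow> (snd (snd (l2 (int j))) = 0 \<longleftrightarrow> is_piece_start (fst d2) j)"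
    "\<forall>j<length W. fst (l2 (int j)) = root_letter d2 j"
    using labelled_window_of_infl_decomp[OF rs _ long(1), of "fst d2" "snd d2",
        unfolded prod.collapse, OF W(3)]
    by (elim exE conjE) (rule that)
  have "labels_disagree (l1 (0 + int p)) (l2 (0 + int p))"
    using disagree l1(2)[rule_format, of p] l1(3)[rule_format, of p] l2(2)[rule_format, of p]
      l2(3)[rule_format, of p] long(4)
    unfolding labels_disagree_def by auto
  moreover have "legal \<theta> (seq_word (\<lambda>i. W ! nat (i + int p)) (- int n) (2 * n + 1))"
    using legal_take_drop[OF W(1)] seq_word_recentre[OF long(2,3)] by simp
  ultimately show ?thesis
    using labelled_window_recentre[OF l1(1) long(2,3)] labelled_window_recentre[OF l2(1) long(2,3)]
    by blast
qed

lemma subshift_of_legal_windows_limit: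
  assumes legal: "\<And>n. legal \<theta> (seq_word (X n) (- int n) (2 * n + 1))"
    and limit: "\<forall>M. \<exists>n\<ge>M. \<forall>j. \<bar>j\<bar> \<le> int M \<longrightarrow> X n j = x j"
  shows "x \<in> subshift \<theta>"
  unfolding subshift_def
proof (intro CollectI allI)
  fix i m
  obtain n where n: "nat \<bar>i\<bar> + m \<le> n" "\<forall>j. \<bar>j\<bar> \<le> int (nat \<bar>i\<bar> + m) \<longrightarrow> X n j = x j"
    using limit by blast
  then have "seq_word x i m = seq_word (X n) i m" unfolding seq_word_def by auto
  moreover have "sublist (seq_word (X n) i m) (seq_word (X n) (- int n) (2 * n + 1))"
    using n(1) by (intro sublist_seq_word) auto
  ultimately show "legal \<theta> (seq_word x i m)" using legal_sublist[OF legal] by metis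
qed

lemma preimages_eq_if_recognisable:
  assumes "recognisable \<theta>" "x \<in> subshift \<theta>" "preimage \<theta> x y1 k1" "preimage \<theta> x y2 k2"
  shows "y1 = y2 \<and> k1 = k2"
proof -
  have "\<exists>!p. case p of (y, k) \<Rightarrow> preimage \<theta> x y k"
    using assms(1,2) unfolding recognisable_iff_unique_preimage by blast
  then have "(y1, k1) = (y2, k2)" using assms(3,4) by (metis (mono_tags) case_prod_conv)
  then show ?thesis by simp
qed

theorem recognisable_imp_locally_recognisable:
  fixes \<theta> :: "'a::finite \<Rightarrow> 'a list set"
  assumes rs: "random_subst \<theta>" and rec: "recognisable \<theta>"
  shows "locally_recognisable \<theta>"
proof (rule ccontr)
  assume "\<not> locally_recognisable \<theta>"
  then obtain X L1 L2 where
    windows1: "\<And>n. labelled_window \<theta> (X n) (L1 n) (- int n) (2 * n + 1)" and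
    windows2: "\<And>n. labelled_window \<theta> (X n) (L2 n) (- int n) (2 * n + 1)" and
    legal: "\<And>n. legal \<theta> (seq_word (X n) (- int n) (2 * n + 1))" and
    disagree: "\<And>n. labels_disagree (L1 n 0) (L2 n 0)"
    using labelled_windows_disagreeing_at_0[OF rs] by metis
  obtain x l1 l2 where l1: "labelling \<theta> x l1" and l2: "labelling \<theta> x l2" and
    limit: "\<forall>M. \<exists>n\<ge>M. \<forall>j. \<bar>j\<bar> \<le> int M \<longrightarrow> X n j = x j \<and> L1 n j = l1 j \<and> L2 n j = l2 j"
    using labelled_windows_limit[OF rs windows1 windows2] by blast
  have "x \<in> subshift \<theta>"
    using limit by (intro subshift_of_legal_windows_limit[OF legal]) blast
  moreover have "labels_disagree (l1 0) (l2 0)"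
  proof -
    obtain n where "\<forall>j. \<bar>j\<bar> \<le> int 0 \<longrightarrow> X n j = x j \<and> L1 n j = l1 j \<and> L2 n j = l2 j"
      using limit by blast
    then show ?thesis using disagree[of n] by simp
  qed
  moreover have "compatible \<theta>" using rec unfolding recognisable_def by blast
  ultimately show False
    using preimages_eq_if_recognisable[OF rec]
      labelling.preimage_of_labelling[OF l1] labelling.preimage_of_labelling[OF l2]
      labelling.root_at_tile_start_0[OF l1] labelling.root_at_tile_start_0[OF l2]
    unfolding labels_disagree_def by metis
qed

theorem proposition5p7:
  fixes \<theta> :: "'a::finite \<Rightarrow> 'a list set"
  assumes "random_subst \<theta>" and "compatible \<theta>"
  shows "recognisable \<theta> \<longleftrightarrow> locally_recognisable \<theta>"
  using recognisable_imp_locally_recognisable[OF assms(1)]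
    locally_recognisable_imp_recognisable[OF assms]
  by blast

end
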